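(* Let $A(x)$ be the unique formal power series with $A(0)=1$ such that $[x^n]A(x)^n=[x^{n+1}]I_0(x)$ for all $n\ge0$ (OEIS A088221). Then $A(x)=(1+C(x))^2$; that is, $[x^n]A(x)$ equals the number of ordered pairs $(C_1,C_2)$ of chord diagrams, each either empty or connected, with total number of chords $n$.
   Context: Chord diagrams are perfect matchings of $\{1,\dots,2n\}$ counted by chords. Connectedness refers to the intersection graph (chords adjacent iff they cross: $\{a<b\},\{c<d\}$ with $a<c<b<d$ or $c<a<d<b$); the empty diagram is not connected. $C(x)$ is the ordinary generating function of connected chord diagrams. $I_0(x)$ is the ordinary generating function of nonempty indecomposable chord diagrams (no $0<k<n$ with $\{1,\dots,2k\}$ a union of chords). *)

theory Defs
  imports "HOL-Computational_Algebra.Formal_Power_Series"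
begin

definition chord_diagram :: "nat \<Rightarrow> (nat \<times> nat) set \<Rightarrow> bool" where
  "chord_diagram n M \<longleftrightarrow>
     (\<forall>p\<in>M. fst p < snd p \<and> fst p \<in> {1..2*n} \<and> snd p \<in> {1..2*n}) \<and>
     (\<forall>i\<in>{1..2*n}. \<exists>!p. p \<in> M \<and> (fst p = i \<or> snd p = i))"

definition crosses :: "nat \<times> nat \<Rightarrow> nat \<times> nat \<Rightarrow> bool" where
  "crosses p q \<longleftrightarrow>
     (fst p < fst q \<and> fst q < snd p \<and> snd p < snd q) \<or>
     (fst q < fst p \<and> fst p < snd q \<and> snd q < snd p)"

definition connected_cd :: "(nat \<times> nat) set \<Rightarrow> bool" where
  "connected_cd M \<longleftrightarrow> M \<noteq> {} \<and>
     (\<forall>p\<in>M. \<forall>q\<in>M. (p, q) \<in> {(x, y). x \<in> M \<and> y \<in> M \<and> crosses x y}\<^sup>*)"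

definition chord_set :: "nat \<times> nat \<Rightarrow> nat set" where
  "chord_set p = {fst p, snd p}"

definition indecomposable_cd :: "nat \<Rightarrow> (nat \<times> nat) set \<Rightarrow> bool" where
  "indecomposable_cd n M \<longleftrightarrow> n \<ge> 1 \<and>
     \<not> (\<exists>k. 0 < k \<and> k < n \<and> (\<exists>S\<subseteq>M. \<Union>(chord_set ` S) = {1..2*k}))"

definition C_gf :: "rat fps" where
  "C_gf = Abs_fps (\<lambda>n. of_nat (card {M. chord_diagram n M \<and> connected_cd M}))"

definition I0_gf :: "rat fps" where
  "I0_gf = Abs_fps (\<lambda>n. of_nat (card {M. chord_diagram n M \<and> indecomposable_cd n M}))"

end

theory Submission
  imports Defs
begin

unbundle fps_syntax

text \<open>
  Decompose a perfect matching of a finite set of points by its root component: the connected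
  component, in the crossing graph, of the chord through the least point. The other chords enclose
  no point of the root component, so they form independent matchings of the gaps between
  consecutive root points and of the points after the last one. Counting by the number of points,
  with \<open>E = \<Sum> (n - 1)!! x\<^sup>n\<close>, this gives \<open>E = 1 + C(x\<^sup>2 E\<^sup>2)\<close>; counting only matchings whose root
  component reaches the last point, which are exactly the indecomposable ones, gives
  \<open>E = 1 + I\<^sub>0(x\<^sup>2) E\<close>. Since \<open>E(x) = D(x\<^sup>2)\<close> for the series \<open>D = \<Sum> (2n - 1)!! x\<^sup>n\<close> of all chord
  diagrams, \<open>D = (1 + C)(x D\<^sup>2)\<close> and \<open>D = 1 + I\<^sub>0 D\<close>.

  The first identity says \<open>\<phi>(x u) = u\<close> for \<open>\<phi> = (1 + C)\<^sup>2\<close> and \<open>u = D\<^sup>2\<close>, so by Lagrange inversion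
  \<open>[x\<^sup>n] \<phi>\<^sup>n = [x\<^sup>n] (x u)' / u\<close>; the second, together with \<open>D\<^sub>n\<^sub>+\<^sub>1 = (2n + 1) D\<^sub>n\<close>, gives
  \<open>I\<^sub>0 = x (x u)' / u\<close>. A series with constant term \<open>1\<close> is determined by its diagonal coefficients
  \<open>[x\<^sup>n] A\<^sup>n\<close>, which proves \<open>A = (1 + C)\<^sup>2\<close>.
\<close>

section \<open>Perfect matchings\<close>

definition perfect_matching :: "nat set \<Rightarrow> (nat \<times> nat) set \<Rightarrow> bool" where
  "perfect_matching S M \<longleftrightarrow> (\<forall>p\<in>M. fst p < snd p \<and> fst p \<in> S \<and> snd p \<in> S) \<and>
     (\<forall>i\<in>S. \<exists>!p. p \<in> M \<and> (fst p = i \<or> snd p = i))"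

definition points :: "(nat \<times> nat) set \<Rightarrow> nat set" where
  "points R = \<Union> (chord_set ` R)"

lemma chord_diagram_iff_perfect_matching: "chord_diagram n M \<longleftrightarrow> perfect_matching {1..2*n} M"
  unfolding chord_diagram_def perfect_matching_def by simp

lemma perfect_matching_chordD:
  "perfect_matching S M \<Longrightarrow> p \<in> M \<Longrightarrow> fst p \<in> S \<and> snd p \<in> S \<and> fst p < snd p"
  unfolding perfect_matching_def by auto

lemma perfect_matching_covers: "perfect_matching S M \<Longrightarrow> i \<in> S \<Longrightarrow> \<exists>p\<in>M. i \<in> chord_set p"
  unfolding perfect_matching_def chord_set_def by (metis insertCI)

lemma perfect_matching_chord_eq:
  assumes "perfect_matching S M" "p \<in> M" "q \<in> M" "i \<in> chord_set p" "i \<in> chord_set q"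
  shows "p = q"
proof -
  have "i \<in> S" using assms unfolding perfect_matching_def chord_set_def by auto
  then have "\<exists>!p. p \<in> M \<and> (fst p = i \<or> snd p = i)"
    using assms(1) unfolding perfect_matching_def by blast
  moreover have "p \<in> M \<and> (fst p = i \<or> snd p = i)" "q \<in> M \<and> (fst q = i \<or> snd q = i)"
    using assms unfolding chord_set_def by auto
  ultimately show "p = q" by blast
qed

lemma perfect_matchingI:
  assumes "\<And>p. p \<in> M \<Longrightarrow> fst p < snd p \<and> fst p \<in> S \<and> snd p \<in> S"
    and "\<And>i. i \<in> S \<Longrightarrow> \<exists>p\<in>M. i \<in> chord_set p"
    and "\<And>p q i. p \<in> M \<Longrightarrow> q \<in> M \<Longrightarrow> i \<in> chord_set p \<Longrightarrow> i \<in> chord_set q \<Longrightarrow> p = q"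
  shows "perfect_matching S M"
  unfolding perfect_matching_def
proof (intro conjI ballI)
  fix i assume "i \<in> S"
  then obtain p where p: "p \<in> M" "i \<in> chord_set p" using assms(2) by blast
  show "\<exists>!p. p \<in> M \<and> (fst p = i \<or> snd p = i)"
  proof (rule ex1I[of _ p])
    show "p \<in> M \<and> (fst p = i \<or> snd p = i)" using p by (auto simp: chord_set_def)
    fix q assume "q \<in> M \<and> (fst q = i \<or> snd q = i)"
    then show "q = p" using assms(3)[of q p i] p by (auto simp: chord_set_def)
  qed
qed (use assms(1) in auto)

lemma perfect_matching_subset: "perfect_matching S M \<Longrightarrow> M \<subseteq> S \<times> S"
  by (auto dest: perfect_matching_chordD)

lemma finite_perfect_matchings: "finite S \<Longrightarrow> finite {M. perfect_matching S M}"
  by (rule finite_subset[of _ "Pow (S \<times> S)"]) (auto dest: perfect_matching_subset)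

lemma perfect_matching_empty_iff: "perfect_matching {} M \<longleftrightarrow> M = {}"
  unfolding perfect_matching_def by auto

lemma perfect_matching_singleton: "a < b \<Longrightarrow> perfect_matching {a, b} {(a, b)}"
  by (rule perfect_matchingI) (auto simp: chord_set_def)

lemma points_subset: "perfect_matching S M \<Longrightarrow> N \<subseteq> M \<Longrightarrow> points N \<subseteq> S"
  unfolding points_def chord_set_def by (auto dest: perfect_matching_chordD)

lemma points_perfect_matching: "perfect_matching P R \<Longrightarrow> points R = P"
  using points_subset[of P R R] perfect_matching_covers[of P R] by (auto simp: points_def)

lemma perfect_matching_Un:
  assumes "perfect_matching A M1" "perfect_matching B M2" "A \<inter> B = {}"
  shows "perfect_matching (A \<union> B) (M1 \<union> M2)"
proof (rule perfect_matchingI)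
  have pts: "chord_set p \<subseteq> A" if "p \<in> M1" for p
    using perfect_matching_chordD[OF assms(1) that] by (simp add: chord_set_def)
  have pts': "chord_set p \<subseteq> B" if "p \<in> M2" for p
    using perfect_matching_chordD[OF assms(2) that] by (simp add: chord_set_def)
  fix p q i assume "p \<in> M1 \<union> M2" "q \<in> M1 \<union> M2" "i \<in> chord_set p" "i \<in> chord_set q"
  then show "p = q"
    using perfect_matching_chord_eq[OF assms(1)] perfect_matching_chord_eq[OF assms(2)]
      pts pts' assms(3) by blast
qed (use perfect_matching_chordD[OF assms(1)] perfect_matching_chordD[OF assms(2)]
         perfect_matching_covers[OF assms(1)] perfect_matching_covers[OF assms(2)] in blast)+

lemma perfect_matching_points_subset:
  assumes M: "perfect_matching S M" and N: "N \<subseteq> M"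
  shows "perfect_matching (points N) N"
proof (rule perfect_matchingI)
  fix p assume "p \<in> N"
  then show "fst p < snd p \<and> fst p \<in> points N \<and> snd p \<in> points N"
    using perfect_matching_chordD[OF M] N unfolding points_def chord_set_def by blast
next
  fix p q i assume "p \<in> N" "q \<in> N" "i \<in> chord_set p" "i \<in> chord_set q"
  then show "p = q" using perfect_matching_chord_eq[OF M] N by blast
qed (auto simp: points_def)

lemma perfect_matching_Diff_points:
  assumes "perfect_matching S M" "N \<subseteq> M"
  shows "perfect_matching (S - points N) (M - N)"
proof (rule perfect_matchingI)
  fix q assume q: "q \<in> M - N"
  have "fst q \<notin> points N" "snd q \<notin> points N"
    using q perfect_matching_chord_eq[OF assms(1), of q] assms(2) unfolding points_def chord_set_def by blast+
  then show "fst q < snd q \<and> fst q \<in> S - points N \<and> snd q \<in> S - points N"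
    using perfect_matching_chordD[OF assms(1), of q] q by auto
next
  fix i assume "i \<in> S - points N"
  then show "\<exists>q\<in>M - N. i \<in> chord_set q"
    using perfect_matching_covers[OF assms(1), of i] unfolding points_def by blast
qed (use perfect_matching_chord_eq[OF assms(1)] in blast)

fun matching_count :: "nat \<Rightarrow> nat" where
  "matching_count 0 = 1"
| "matching_count (Suc 0) = 0"
| "matching_count (Suc (Suc n)) = Suc n * matching_count n"

lemma matching_count_odd: "matching_count (2 * k + 1) = 0"
  by (induction k) auto

lemma perfect_matching_Min_chord:
  assumes M: "perfect_matching S M" and fin: "finite S" and ne: "S \<noteq> {}"
  obtains j where "j \<in> S - {Min S}" "(Min S, j) \<in> M"
proof -
  obtain p where p: "p \<in> M" "Min S \<in> chord_set p"
    using perfect_matching_covers[OF M Min_in[OF fin ne]] by blast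
  have "fst p \<in> S" "fst p < snd p" using perfect_matching_chordD[OF M p(1)] by auto
  then have "fst p = Min S"
    using p(2) Min_le[OF fin, of "fst p"] by (auto simp: chord_set_def)
  then show thesis
    using that[of "snd p"] p(1) perfect_matching_chordD[OF M p(1)] by (cases p) auto
qed

lemma perfect_matchings_Min_decomp:
  assumes fin: "finite S" and ne: "S \<noteq> {}"
  shows "{M. perfect_matching S M} =
    (\<Union>j\<in>S - {Min S}. insert (Min S, j) ` {M. perfect_matching (S - {Min S, j}) M})"
proof (intro equalityI subsetI)
  fix M assume "M \<in> {M. perfect_matching S M}"
  then have M: "perfect_matching S M" by simp
  obtain j where j: "j \<in> S - {Min S}" "(Min S, j) \<in> M"
    using perfect_matching_Min_chord[OF M fin ne] .
  have "points {(Min S, j)} = {Min S, j}" by (simp add: points_def chord_set_def)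
  then have "perfect_matching (S - {Min S, j}) (M - {(Min S, j)})"
    using perfect_matching_Diff_points[OF M, of "{(Min S, j)}"] j by simp
  moreover have "M = insert (Min S, j) (M - {(Min S, j)})" using j by auto
  ultimately show "M \<in> (\<Union>j\<in>S - {Min S}. insert (Min S, j) ` {M. perfect_matching (S - {Min S, j}) M})"
    using j by blast
next
  fix M assume "M \<in> (\<Union>j\<in>S - {Min S}. insert (Min S, j) ` {M. perfect_matching (S - {Min S, j}) M})"
  then obtain j M' where j: "j \<in> S - {Min S}" and M': "perfect_matching (S - {Min S, j}) M'"
    and "M = insert (Min S, j) M'" by blast
  moreover have "Min S < j" using j Min_le[OF fin, of j] by auto
  moreover have "{Min S, j} \<union> (S - {Min S, j}) = S" using j Min_in[OF fin ne] by auto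
  ultimately show "M \<in> {M. perfect_matching S M}"
    using perfect_matching_Un[OF perfect_matching_singleton M', of "Min S" j] by auto
qed

lemma card_perfect_matchings: "finite S \<Longrightarrow> card {M. perfect_matching S M} = matching_count (card S)"
proof (induction "card S" arbitrary: S rule: less_induct)
  case less
  show ?case
  proof (cases "S = {}")
    case True
    then have "{M. perfect_matching S M} = {{}}" by (simp add: perfect_matching_empty_iff)
    then show ?thesis using True by simp
  next
    case False
    define s where "s = Min S"
    have sS: "s \<in> S" using less.prems False s_def by simp
    let ?F = "\<lambda>j. insert (s, j) ` {M. perfect_matching (S - {s, j}) M}"
    have card_F: "card (?F j) = matching_count (card S - 2)" if j: "j \<in> S - {s}" for j
    proof -
      have "(s, j) \<notin> M" if "perfect_matching (S - {s, j}) M" for M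
        using perfect_matching_chordD[OF that] by fastforce
      then have "inj_on (insert (s, j)) {M. perfect_matching (S - {s, j}) M}"
        by (intro inj_onI) (metis insert_ident mem_Collect_eq)
      moreover have "card (S - {s, j}) = card S - 2"
        using j sS less.prems by (simp add: card_Diff_subset)
      moreover have "card (S - {s, j}) < card S"
        using j sS less.prems by (intro psubset_card_mono) auto
      ultimately show ?thesis using less.hyps less.prems by (simp add: card_image)
    qed
    have "card {M. perfect_matching S M} = (\<Sum>j\<in>S - {s}. card (?F j))"
      unfolding perfect_matchings_Min_decomp[OF less.prems False, folded s_def]
    proof (rule card_UN_disjoint)
      show "\<forall>j\<in>S - {s}. \<forall>k\<in>S - {s}. j \<noteq> k \<longrightarrow> ?F j \<inter> ?F k = {}"
      proof (intro ballI impI equals0I)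
        fix j k M assume "j \<noteq> k" "M \<in> ?F j \<inter> ?F k"
        then obtain M' where "perfect_matching (S - {s, k}) M'" "(s, j) \<in> M'"
          by auto
        then show False using perfect_matching_chordD by fastforce
      qed
    qed (use less.prems finite_perfect_matchings in auto)
    also have "\<dots> = (card S - 1) * matching_count (card S - 2)"
      using card_F less.prems sS by simp
    also have "\<dots> = matching_count (card S)"
      using False less.prems by (cases "card S" rule: matching_count.cases) auto
    finally show ?thesis .
  qed
qed

definition rank_in :: "nat set \<Rightarrow> nat \<Rightarrow> nat" where
  "rank_in A x = card {y\<in>A. y < x}"

lemma strict_mono_on_rank_in: "finite A \<Longrightarrow> strict_mono_on A (rank_in A)"
  unfolding rank_in_def by (rule strict_mono_onI) (auto intro!: psubset_card_mono)

lemma bij_betw_rank_in: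
  assumes "finite A"
  shows "bij_betw (rank_in A) A {..<card A}"
proof -
  have inj: "inj_on (rank_in A) A"
    by (rule strict_mono_on_imp_inj_on[OF strict_mono_on_rank_in[OF assms]])
  have "rank_in A ` A \<subseteq> {..<card A}"
    unfolding rank_in_def using assms by (auto intro!: psubset_card_mono)
  moreover have "card (rank_in A ` A) = card {..<card A}" using card_image[OF inj] by simp
  ultimately show ?thesis using inj by (simp add: bij_betw_def card_subset_eq)
qed

lemma strict_mono_on_inv_into:
  fixes f :: "'a::linorder \<Rightarrow> 'b::linorder"
  assumes "strict_mono_on A f" "bij_betw f A B"
  shows "strict_mono_on B (inv_into A f)"
proof (rule strict_mono_onI)
  fix x y assume xy: "x \<in> B" "y \<in> B" "x < y"
  then have "inv_into A f x \<in> A" "inv_into A f y \<in> A"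
    "f (inv_into A f x) = x" "f (inv_into A f y) = y"
    using assms(2) by (auto simp: bij_betw_def inv_into_into f_inv_into_f)
  then show "inv_into A f x < inv_into A f y"
    using strict_mono_onD[OF assms(1)] xy(3) by (metis linorder_neqE order.asym)
qed

definition crossing_rel :: "(nat \<times> nat) set \<Rightarrow> ((nat \<times> nat) \<times> (nat \<times> nat)) set" where
  "crossing_rel M = {(p, q). p \<in> M \<and> q \<in> M \<and> crosses p q}"

lemma connected_cd_iff_crossing_rel:
  "connected_cd M \<longleftrightarrow> M \<noteq> {} \<and> (\<forall>p\<in>M. \<forall>q\<in>M. (p, q) \<in> (crossing_rel M)\<^sup>*)"
  unfolding connected_cd_def crossing_rel_def by simp

lemma crosses_sym: "crosses p q \<longleftrightarrow> crosses q p"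
  unfolding crosses_def by auto

lemma sym_crossing_rel: "sym (crossing_rel M)"
  unfolding crossing_rel_def sym_def using crosses_sym by auto

lemma crossing_rel_mono: "A \<subseteq> B \<Longrightarrow> crossing_rel A \<subseteq> crossing_rel B"
  unfolding crossing_rel_def by auto

lemma crosses_map_prod:
  assumes "strict_mono_on A f" "chord_set p \<subseteq> A" "chord_set q \<subseteq> A" "crosses p q"
  shows "crosses (map_prod f f p) (map_prod f f q)"
  using assms(4) strict_mono_onD[OF assms(1)] assms(2,3) unfolding crosses_def chord_set_def
  by (cases p, cases q) auto

lemma perfect_matching_map_prod:
  assumes f: "strict_mono_on A f" "bij_betw f A B" and R: "perfect_matching A R"
  shows "perfect_matching B (map_prod f f ` R)"
proof (rule perfect_matchingI)
  have inj: "inj_on f A" and fAB: "f ` A = B" using f(2) by (auto simp: bij_betw_def)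
  have cs: "chord_set (map_prod f f p) = f ` chord_set p" for p
    by (cases p) (auto simp: chord_set_def)
  have cA: "chord_set p \<subseteq> A" if "p \<in> R" for p
    using perfect_matching_chordD[OF R that] by (simp add: chord_set_def)
  show "fst p' < snd p' \<and> fst p' \<in> B \<and> snd p' \<in> B" if p': "p' \<in> map_prod f f ` R" for p'
  proof -
    obtain a b where ab: "(a, b) \<in> R" "p' = (f a, f b)" using p' by auto
    have "a \<in> A" "b \<in> A" "a < b" using perfect_matching_chordD[OF R ab(1)] by auto
    then show ?thesis using strict_mono_onD[OF f(1)] fAB ab(2) by auto
  qed
  show "\<exists>p\<in>map_prod f f ` R. i \<in> chord_set p" if i: "i \<in> B" for i
  proof -
    obtain a where a: "a \<in> A" "i = f a" using i unfolding fAB[symmetric] by auto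
    obtain p where "p \<in> R" "a \<in> chord_set p" using perfect_matching_covers[OF R a(1)] by auto
    then have "map_prod f f p \<in> map_prod f f ` R" "i \<in> chord_set (map_prod f f p)"
      unfolding cs a(2) by auto
    then show ?thesis ..
  qed
  fix p' q' i assume p': "p' \<in> map_prod f f ` R" and q': "q' \<in> map_prod f f ` R"
    and i: "i \<in> chord_set p'" "i \<in> chord_set q'"
  obtain p where p: "p \<in> R" "p' = map_prod f f p" using p' by (rule imageE) simp
  obtain q where q: "q \<in> R" "q' = map_prod f f q" using q' by (rule imageE) simp
  note pq = p(1) q(1) p(2) q(2)
  obtain a b where ab: "a \<in> chord_set p" "b \<in> chord_set q" "i = f a" "i = f b"
    using i unfolding pq(3,4) cs by blast
  have "a \<in> A" "b \<in> A" using ab(1,2) cA[OF pq(1)] cA[OF pq(2)] by auto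
  moreover have "f a = f b" using ab(3,4) by simp
  ultimately have "a = b" using inj_onD[OF inj] by blast
  have "p = q" by (rule perfect_matching_chord_eq[OF R pq(1,2) ab(1)]) (use ab(2) \<open>a = b\<close> in simp)
  then show "p' = q'" using pq by simp
qed

lemma connected_cd_map_prod:
  assumes f: "strict_mono_on A f" and R: "perfect_matching A R" and c: "connected_cd R"
  shows "connected_cd (map_prod f f ` R)"
  unfolding connected_cd_iff_crossing_rel
proof (intro conjI ballI)
  show "map_prod f f ` R \<noteq> {}" using c by (simp add: connected_cd_def)
  have step: "(map_prod f f p, map_prod f f q) \<in> crossing_rel (map_prod f f ` R)"
    if "(p, q) \<in> crossing_rel R" for p q
  proof -
    have pq: "p \<in> R" "q \<in> R" "crosses p q" using that by (auto simp: crossing_rel_def)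
    have "chord_set p \<subseteq> A" "chord_set q \<subseteq> A"
      using perfect_matching_chordD[OF R pq(1)] perfect_matching_chordD[OF R pq(2)]
      by (auto simp: chord_set_def)
    then have "crosses (map_prod f f p) (map_prod f f q)" using crosses_map_prod[OF f _ _ pq(3)] by simp
    then show ?thesis using pq by (simp add: crossing_rel_def)
  qed
  fix p' q' assume p': "p' \<in> map_prod f f ` R" and q': "q' \<in> map_prod f f ` R"
  obtain p where p: "p \<in> R" "p' = map_prod f f p" using p' by (rule imageE) simp
  obtain q where q: "q \<in> R" "q' = map_prod f f q" using q' by (rule imageE) simp
  note pq = p(1) q(1) p(2) q(2)
  have "(p, q) \<in> (crossing_rel R)\<^sup>*" using c pq unfolding connected_cd_iff_crossing_rel by blast
  then have "(map_prod f f p, map_prod f f q) \<in> (crossing_rel (map_prod f f ` R))\<^sup>*"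
    by (induction rule: rtrancl_induct) (simp_all add: rtrancl_into_rtrancl step)
  then show "(p', q') \<in> (crossing_rel (map_prod f f ` R))\<^sup>*" using pq by simp
qed

lemma card_connected_matchings_relabel_le:
  assumes "finite B" "strict_mono_on A f" "bij_betw f A B"
  shows "card {R. perfect_matching A R \<and> connected_cd R} \<le> card {R. perfect_matching B R \<and> connected_cd R}"
proof (rule card_inj_on_le)
  have inj: "inj_on (map_prod f f) (A \<times> A)"
    using assms(3) by (simp add: bij_betw_def map_prod_inj_on)
  show "inj_on (image (map_prod f f)) {R. perfect_matching A R \<and> connected_cd R}"
  proof (rule inj_onI)
    fix R R' assume "R \<in> {R. perfect_matching A R \<and> connected_cd R}"
      "R' \<in> {R. perfect_matching A R \<and> connected_cd R}" "map_prod f f ` R = map_prod f f ` R'"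
    then show "R = R'"
      using inj_on_image_eq_iff[OF inj, of R R'] perfect_matching_subset[of A R]
        perfect_matching_subset[of A R'] by simp
  qed
  show "image (map_prod f f) ` {R. perfect_matching A R \<and> connected_cd R}
      \<subseteq> {R. perfect_matching B R \<and> connected_cd R}"
    using perfect_matching_map_prod[OF assms(2,3)] connected_cd_map_prod[OF assms(2)] by blast
  show "finite {R. perfect_matching B R \<and> connected_cd R}"
    using finite_perfect_matchings[OF assms(1)] by simp
qed

definition connected_count :: "nat \<Rightarrow> nat" where
  "connected_count m = card {R. perfect_matching {..<m} R \<and> connected_cd R}"

lemma card_connected_matchings:
  assumes "finite P"
  shows "card {R. perfect_matching P R \<and> connected_cd R} = connected_count (card P)"
  unfolding connected_count_def
proof (rule antisym)
  note rank = strict_mono_on_rank_in[OF assms] bij_betw_rank_in[OF assms]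
  show "card {R. perfect_matching P R \<and> connected_cd R}
      \<le> card {R. perfect_matching {..<card P} R \<and> connected_cd R}"
    by (rule card_connected_matchings_relabel_le[OF _ rank]) simp
  show "card {R. perfect_matching {..<card P} R \<and> connected_cd R}
      \<le> card {R. perfect_matching P R \<and> connected_cd R}"
    by (rule card_connected_matchings_relabel_le[OF assms strict_mono_on_inv_into[OF rank]
          bij_betw_inv_into[OF rank(2)]])
qed

lemma connected_count_odd: "connected_count (2 * k + 1) = 0"
proof -
  have "connected_count (2 * k + 1) \<le> card {R. perfect_matching {..<2 * k + 1} R}"
    unfolding connected_count_def by (rule card_mono[OF finite_perfect_matchings]) auto
  then show ?thesis using card_perfect_matchings[of "{..<2 * k + 1}"] matching_count_odd[of k] by simp
qed

lemma connected_count_0: "connected_count 0 = 0"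
  unfolding connected_count_def by (simp add: perfect_matching_empty_iff connected_cd_def)

section \<open>The root component\<close>

definition root_component :: "nat \<Rightarrow> (nat \<times> nat) set \<Rightarrow> (nat \<times> nat) set" where
  "root_component s M = {q\<in>M. \<exists>p\<in>M. s \<in> chord_set p \<and> (p, q) \<in> (crossing_rel M)\<^sup>*}"

definition encloses_none :: "(nat \<times> nat) set \<Rightarrow> nat set \<Rightarrow> bool" where
  "encloses_none N P \<longleftrightarrow> (\<forall>q\<in>N. \<forall>x\<in>P. \<not> (fst q < x \<and> x < snd q))"

lemma connected_cd_crossing_between:
  assumes c: "connected_cd R" and "q1 \<in> R" "q2 \<in> R" "Q q1" "\<not> Q q2"
  obtains q r where "q \<in> R" "r \<in> R" "crosses q r" "Q q" "\<not> Q r"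
proof -
  have "(q1, q2) \<in> (crossing_rel R)\<^sup>*" using c assms(2,3) unfolding connected_cd_iff_crossing_rel by blast
  then have "Q q2 \<or> (\<exists>q r. q \<in> R \<and> r \<in> R \<and> crosses q r \<and> Q q \<and> \<not> Q r)"
  proof (induction rule: rtrancl_induct)
    case base then show ?case using assms(4) by simp
  next
    case (step y z)
    then have "y \<in> R" "z \<in> R" "crosses y z" by (auto simp: crossing_rel_def)
    then show ?case using step.IH by blast
  qed
  then show thesis using assms(5) that by blast
qed

lemma crosses_if_separates:
  assumes "fst q < snd q" "fst r < snd r"
    "fst r \<noteq> fst q" "fst r \<noteq> snd q" "snd r \<noteq> fst q" "snd r \<noteq> snd q"
    "(fst q < fst r \<and> fst r < snd q) \<noteq> (fst q < snd r \<and> snd r < snd q)"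
  shows "crosses q r"
  using assms unfolding crosses_def by auto

lemma not_crosses_nested:
  assumes "a < fst c" "snd c < b" "fst c < snd c" "fst r < snd r"
    "\<not> (a < fst r \<and> fst r < b)" "\<not> (a < snd r \<and> snd r < b)"
  shows "\<not> crosses c r"
  using assms unfolding crosses_def by auto

context
  fixes S :: "nat set" and M and s
  assumes sS: "s \<in> S" and smin: "\<And>x. x \<in> S \<Longrightarrow> s \<le> x" and M: "perfect_matching S M"
begin

definition root_chord :: "nat \<times> nat" where
  "root_chord = (SOME p. p \<in> M \<and> s \<in> chord_set p)"

lemma root_chord: "root_chord \<in> M" "s \<in> chord_set root_chord"
  using someI_ex[of "\<lambda>p. p \<in> M \<and> s \<in> chord_set p"] perfect_matching_covers[OF M sS]
  unfolding root_chord_def by auto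

lemma root_component_eq: "root_component s M = {q\<in>M. (root_chord, q) \<in> (crossing_rel M)\<^sup>*}"
  unfolding root_component_def using root_chord perfect_matching_chord_eq[OF M] by blast

lemma root_component_subset: "root_component s M \<subseteq> M"
  unfolding root_component_def by auto

lemma root_chord_in_root_component: "root_chord \<in> root_component s M"
  unfolding root_component_eq using root_chord by simp

lemma root_component_crosses_closed:
  "r \<in> root_component s M \<Longrightarrow> q \<in> M \<Longrightarrow> crosses r q \<Longrightarrow> q \<in> root_component s M"
  unfolding root_component_eq crossing_rel_def by (auto intro: rtrancl_into_rtrancl)

lemma rtrancl_crossing_rel_root_component:
  "(root_chord, q) \<in> (crossing_rel M)\<^sup>* \<Longrightarrow> (root_chord, q) \<in> (crossing_rel (root_component s M))\<^sup>*"
proof (induction rule: rtrancl_induct)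
  case (step y z)
  have "y \<in> M" "z \<in> M" "crosses y z" using step(2) by (auto simp: crossing_rel_def)
  then have "y \<in> root_component s M" "z \<in> root_component s M"
    using step(1) root_chord rtrancl_into_rtrancl[OF step(1) step(2)]
    unfolding root_component_eq by auto
  then have "(y, z) \<in> crossing_rel (root_component s M)" using \<open>crosses y z\<close> by (simp add: crossing_rel_def)
  then show ?case by (rule rtrancl_into_rtrancl[OF step.IH])
qed simp

lemma connected_root_component: "connected_cd (root_component s M)"
  unfolding connected_cd_iff_crossing_rel
proof (intro conjI ballI)
  show "root_component s M \<noteq> {}" using root_chord_in_root_component by blast
  fix q1 q2 assume q: "q1 \<in> root_component s M" "q2 \<in> root_component s M"
  have a: "(root_chord, q1) \<in> (crossing_rel (root_component s M))\<^sup>*"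
    "(root_chord, q2) \<in> (crossing_rel (root_component s M))\<^sup>*"
    using q rtrancl_crossing_rel_root_component unfolding root_component_eq by auto
  have "(q1, root_chord) \<in> (crossing_rel (root_component s M))\<^sup>*"
    using a(1) sym_rtrancl[OF sym_crossing_rel] by (auto dest: symD)
  then show "(q1, q2) \<in> (crossing_rel (root_component s M))\<^sup>*" using a(2) by simp
qed

lemma perfect_matching_root_component:
  "perfect_matching (points (root_component s M)) (root_component s M)"
  by (rule perfect_matching_points_subset[OF M root_component_subset])

lemma points_root_component_subset: "points (root_component s M) \<subseteq> S"
  by (rule points_subset[OF M root_component_subset])

lemma in_points_root_component: "s \<in> points (root_component s M)"
  using root_chord root_chord_in_root_component unfolding points_def by blast

lemma perfect_matching_outside_root_component:
  "perfect_matching (S - points (root_component s M)) (M - root_component s M)"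
  by (rule perfect_matching_Diff_points[OF M root_component_subset])

text \<open>Chords of the root component do not cross a chord \<open>q\<close> outside it, so each lies
  entirely inside or entirely outside \<open>q\<close>. If \<open>q\<close> enclosed a point of the root component, the chord
  through that point would lie inside and the chord through \<open>s\<close> outside; connectedness would then
  force an inside chord to cross an outside one.\<close>

lemma encloses_none_outside_root_component:
  "encloses_none (M - root_component s M) (points (root_component s M))"
  unfolding encloses_none_def
proof (intro ballI notI)
  let ?R = "root_component s M" and ?P = "points (root_component s M)"
  fix q x assume q: "q \<in> M - ?R" and x: "x \<in> ?P" and ax: "fst q < x \<and> x < snd q"
  have qi: "fst q < snd q" "fst q \<notin> ?P" "snd q \<notin> ?P"
    using perfect_matching_chordD[OF perfect_matching_outside_root_component, of q] q by auto
  have rP: "fst r \<in> ?P" "snd r \<in> ?P" "fst r < snd r" if "r \<in> ?R" for r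
    using perfect_matching_chordD[OF perfect_matching_root_component that] by auto
  have nested: "(fst q < fst r \<and> fst r < snd q) = (fst q < snd r \<and> snd r < snd q)"
    if r: "r \<in> ?R" for r
  proof (rule ccontr)
    assume sep: "\<not> ?thesis"
    have "crosses q r"
      by (rule crosses_if_separates) (use sep qi rP[OF r] in auto)
    then show False using root_component_crosses_closed[OF r] q crosses_sym by blast
  qed
  let ?inside = "\<lambda>c. fst q < fst c \<and> snd c < snd q"
  obtain rx where rx: "rx \<in> ?R" "x \<in> chord_set rx" using x unfolding points_def by blast
  have "?inside rx"
    using rx(2) nested[OF rx(1)] ax rP[OF rx(1)] by (auto simp: chord_set_def)
  moreover have "fst q \<in> S" "fst q \<noteq> s"
    using perfect_matching_chordD[OF M, of q] q qi(2) in_points_root_component by auto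
  then have "s < fst q" using smin[of "fst q"] by simp
  then have "\<not> ?inside root_chord"
    using root_chord(2) rP[OF root_chord_in_root_component] by (auto simp: chord_set_def)
  ultimately obtain c r where cr: "c \<in> ?R" "r \<in> ?R" "crosses c r" "?inside c" "\<not> ?inside r"
    using connected_cd_crossing_between[OF connected_root_component rx(1) root_chord_in_root_component,
        of ?inside]
    by blast
  have "\<not> (fst q < fst r \<and> fst r < snd q)" "\<not> (fst q < snd r \<and> snd r < snd q)"
    using nested[OF cr(2)] cr(5) by auto
  then have "\<not> crosses c r"
    by (intro not_crosses_nested[of "fst q" c "snd q" r]) (use cr(4) rP[OF cr(1)] rP[OF cr(2)] in auto)
  then show False using cr(3) by simp
qed

end

lemma root_component_Un:
  assumes sP: "s \<in> P" and smin: "\<And>x. x \<in> S \<Longrightarrow> s \<le> x" and PS: "P \<subseteq> S"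
    and R: "perfect_matching P R" "connected_cd R"
    and N: "perfect_matching (S - P) N" "encloses_none N P"
  shows "perfect_matching S (R \<union> N)" "root_component s (R \<union> N) = R" "R \<inter> N = {}"
proof -
  show M: "perfect_matching S (R \<union> N)"
    using perfect_matching_Un[OF R(1) N(1)] PS by (metis Diff_disjoint Un_Diff_cancel sup.absorb2)
  have sS: "s \<in> S" using sP PS by auto
  show "R \<inter> N = {}"
    using perfect_matching_chordD[OF R(1)] perfect_matching_chordD[OF N(1)] by blast
  obtain p where p: "p \<in> R" "s \<in> chord_set p" using perfect_matching_covers[OF R(1) sP] by blast
  have p_root: "root_chord (R \<union> N) s = p"
    using root_chord[OF sS smin M] perfect_matching_chord_eq[OF M, of "root_chord (R \<union> N) s" p s] p
    by auto
  show "root_component s (R \<union> N) = R"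
  proof (intro equalityI subsetI)
    fix q assume "q \<in> root_component s (R \<union> N)"
    then have "(p, q) \<in> (crossing_rel (R \<union> N))\<^sup>*"
      using root_component_eq[OF sS smin M] p_root by simp
    then show "q \<in> R"
    proof (induction rule: rtrancl_induct)
      case (step y z)
      then have yz: "y \<in> R" "z \<in> R \<union> N" "crosses y z" by (auto simp: crossing_rel_def)
      have "fst y \<in> P" "snd y \<in> P" using perfect_matching_chordD[OF R(1) yz(1)] by auto
      then show "z \<in> R" using N(2) yz unfolding encloses_none_def crosses_def by blast
    qed (use p in simp)
  next
    fix q assume q: "q \<in> R"
    have "(p, q) \<in> (crossing_rel R)\<^sup>*" using R(2) p(1) q unfolding connected_cd_iff_crossing_rel by blast
    then have "(p, q) \<in> (crossing_rel (R \<union> N))\<^sup>*"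
      using rtrancl_mono[OF crossing_rel_mono[of R "R \<union> N"]] by blast
    then show "q \<in> root_component s (R \<union> N)" using root_component_eq[OF sS smin M] p_root q by simp
  qed
qed

definition gap_count :: "nat set \<Rightarrow> nat set \<Rightarrow> nat" where
  "gap_count S P = card {N. perfect_matching (S - P) N \<and> encloses_none N P}"

definition root_splits ::
    "nat set \<Rightarrow> (nat set \<Rightarrow> bool) \<Rightarrow> (nat set \<times> (nat \<times> nat) set \<times> (nat \<times> nat) set) set" where
  "root_splits S Q = (SIGMA P:{P. P \<subseteq> S \<and> Min S \<in> P \<and> Q P}.
     {R. perfect_matching P R \<and> connected_cd R} \<times> {N. perfect_matching (S - P) N \<and> encloses_none N P})"

lemma bij_betw_root_splits:
  assumes fin: "finite S" and ne: "S \<noteq> {}"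
  shows "bij_betw (\<lambda>(P, R, N). R \<union> N) (root_splits S Q)
    {M. perfect_matching S M \<and> Q (points (root_component (Min S) M))}"
proof (rule bij_betw_byWitness[where f' = "\<lambda>M. (points (root_component (Min S) M),
    root_component (Min S) M, M - root_component (Min S) M)"])
  have sS: "Min S \<in> S" using fin ne by simp
  have smin: "\<And>x. x \<in> S \<Longrightarrow> Min S \<le> x" using fin by simp
  have root_Un: "root_component (Min S) (R \<union> N) = R" "R \<inter> N = {}" "perfect_matching S (R \<union> N)"
    if "(P, R, N) \<in> root_splits S Q" for P R N
    using root_component_Un[of "Min S" P S R N] that smin by (auto simp: root_splits_def)
  show "\<forall>a\<in>root_splits S Q. (\<lambda>M. (points (root_component (Min S) M), root_component (Min S) M,
      M - root_component (Min S) M)) ((\<lambda>(P, R, N). R \<union> N) a) = a"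
  proof
    fix a assume "a \<in> root_splits S Q"
    moreover obtain P R N where a: "a = (P, R, N)" by (cases a) auto
    ultimately have "(P, R, N) \<in> root_splits S Q" by simp
    then show "(\<lambda>M. (points (root_component (Min S) M), root_component (Min S) M,
        M - root_component (Min S) M)) ((\<lambda>(P, R, N). R \<union> N) a) = a"
      using root_Un[of P R N] points_perfect_matching[of P R] unfolding a
      by (auto simp: root_splits_def)
  qed
  show "\<forall>M\<in>{M. perfect_matching S M \<and> Q (points (root_component (Min S) M))}.
     (\<lambda>(P, R, N). R \<union> N) (points (root_component (Min S) M), root_component (Min S) M,
        M - root_component (Min S) M) = M"
    using root_component_subset[OF sS smin] by auto
  show "(\<lambda>(P, R, N). R \<union> N) ` root_splits S Q
     \<subseteq> {M. perfect_matching S M \<and> Q (points (root_component (Min S) M))}"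
  proof clarify
    fix P R N assume PRN: "(P, R, N) \<in> root_splits S Q"
    then show "perfect_matching S (R \<union> N) \<and> Q (points (root_component (Min S) (R \<union> N)))"
      using root_Un[OF PRN] points_perfect_matching[of P R] by (auto simp: root_splits_def)
  qed
  show "(\<lambda>M. (points (root_component (Min S) M), root_component (Min S) M, M - root_component (Min S) M)) `
       {M. perfect_matching S M \<and> Q (points (root_component (Min S) M))} \<subseteq> root_splits S Q"
    using points_root_component_subset[OF sS smin] in_points_root_component[OF sS smin]
      perfect_matching_root_component[OF sS smin] connected_root_component[OF sS smin]
      perfect_matching_outside_root_component[OF sS smin] encloses_none_outside_root_component[OF sS smin]
    by (auto simp: root_splits_def)
qed

lemma card_matchings_by_root:
  assumes fin: "finite S" and ne: "S \<noteq> {}"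
  shows "card {M. perfect_matching S M \<and> Q (points (root_component (Min S) M))} =
    (\<Sum>P | P \<subseteq> S \<and> Min S \<in> P \<and> Q P. connected_count (card P) * gap_count S P)"
proof -
  have "card {M. perfect_matching S M \<and> Q (points (root_component (Min S) M))} = card (root_splits S Q)"
    using bij_betw_same_card[OF bij_betw_root_splits[OF fin ne]] by simp
  also have "\<dots> = (\<Sum>P | P \<subseteq> S \<and> Min S \<in> P \<and> Q P.
      card {R. perfect_matching P R \<and> connected_cd R} * gap_count S P)"
    unfolding root_splits_def
  proof (rule card_SigmaI[THEN trans])
    show "\<forall>P\<in>{P. P \<subseteq> S \<and> Min S \<in> P \<and> Q P}. finite ({R. perfect_matching P R \<and> connected_cd R} \<times>
        {N. perfect_matching (S - P) N \<and> encloses_none N P})"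
    proof
      fix P assume "P \<in> {P. P \<subseteq> S \<and> Min S \<in> P \<and> Q P}"
      then have "finite P" using fin finite_subset by blast
      then show "finite ({R. perfect_matching P R \<and> connected_cd R} \<times>
        {N. perfect_matching (S - P) N \<and> encloses_none N P})"
        using finite_perfect_matchings[of P] finite_perfect_matchings[of "S - P"] fin by simp
    qed
  qed (use fin in \<open>simp_all add: card_cartesian_product gap_count_def\<close>)
  also have "\<dots> = (\<Sum>P | P \<subseteq> S \<and> Min S \<in> P \<and> Q P. connected_count (card P) * gap_count S P)"
    using fin by (intro sum.cong refl) (auto simp: card_connected_matchings dest: finite_subset)
  finally show ?thesis .
qed

text \<open>With \<open>b\<close> set, the root component must reach the last point; for \<open>S = {1..2n}\<close> these
  are the indecomposable diagrams.\<close>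

definition root_point_sets :: "bool \<Rightarrow> nat set \<Rightarrow> nat \<Rightarrow> nat set set" where
  "root_point_sets b S j = {P. P \<subseteq> S \<and> Min S \<in> P \<and> (b \<longrightarrow> Max S \<in> P) \<and> card P = j}"

definition gap_sum :: "bool \<Rightarrow> nat set \<Rightarrow> nat \<Rightarrow> nat" where
  "gap_sum b S j = (\<Sum>P\<in>root_point_sets b S j. gap_count S P)"

lemma card_matchings_by_root_size:
  assumes fin: "finite S" and ne: "S \<noteq> {}"
  shows "card {M. perfect_matching S M \<and> (b \<longrightarrow> Max S \<in> points (root_component (Min S) M))} =
         (\<Sum>j\<le>card S. connected_count j * gap_sum b S j)"
proof -
  let ?PP = "{P. P \<subseteq> S \<and> Min S \<in> P \<and> (b \<longrightarrow> Max S \<in> P)}"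
  have "card {M. perfect_matching S M \<and> (b \<longrightarrow> Max S \<in> points (root_component (Min S) M))} =
         (\<Sum>P\<in>?PP. connected_count (card P) * gap_count S P)"
    using card_matchings_by_root[OF fin ne, of "\<lambda>P. b \<longrightarrow> Max S \<in> P"] by simp
  also have "\<dots> = (\<Sum>j\<le>card S. \<Sum>P | P \<in> ?PP \<and> card P = j. connected_count (card P) * gap_count S P)"
  proof (rule sum.group[symmetric])
    show "finite ?PP" using fin by simp
    show "card ` ?PP \<subseteq> {..card S}" using fin by (auto intro: card_mono)
  qed simp
  also have "\<dots> = (\<Sum>j\<le>card S. connected_count j * gap_sum b S j)"
    unfolding gap_sum_def root_point_sets_def sum_distrib_left
    by (intro sum.cong refl) (auto intro!: sum.cong)
  finally show ?thesis .
qed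

lemma gap_sum_0: "finite S \<Longrightarrow> gap_sum b S 0 = 0"
  unfolding gap_sum_def root_point_sets_def by (rule sum.neutral) (auto dest: finite_subset)

lemma gap_sum_1:
  assumes fin: "finite S" and ne: "S \<noteq> {}"
  shows "gap_sum b S 1 = (if b then (if card S = 1 then 1 else 0) else matching_count (card S - 1))"
proof -
  define s where "s = Min S"
  have sS: "s \<in> S" and smin: "\<And>x. x \<in> S \<Longrightarrow> s \<le> x" using fin ne s_def by simp_all
  have "Max S = s \<longleftrightarrow> card S = 1"
  proof
    assume "Max S = s"
    then have "S = {s}" using sS smin fin by (metis Max_ge antisym singleton_iff subsetI subset_antisym)
    then show "card S = 1" by simp
  qed (auto simp: s_def card_1_singleton_iff)
  moreover have "{P. P \<subseteq> S \<and> Min S \<in> P \<and> card P = 1} = {{s}}"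
    using sS s_def by (auto simp: card_1_singleton_iff)
  ultimately have sets: "root_point_sets b S 1 = (if b \<and> card S \<noteq> 1 then {} else {{s}})"
    using s_def by (auto simp: root_point_sets_def)
  have "{N. perfect_matching (S - {s}) N \<and> encloses_none N {s}} = {N. perfect_matching (S - {s}) N}"
    using smin by (fastforce simp: encloses_none_def dest: perfect_matching_chordD)
  then have "gap_count S {s} = matching_count (card S - 1)"
    unfolding gap_count_def using card_perfect_matchings[of "S - {s}"] fin sS by simp
  then show ?thesis unfolding gap_sum_def sets by auto
qed

text \<open>A chord enclosing no point of \<open>insert s P\<close> cannot straddle \<open>t = Min P\<close>, so such a
  matching splits at \<open>t\<close>.\<close>

context
  fixes S P :: "nat set" and s t :: nat
  assumes smin: "\<And>x. x \<in> S \<Longrightarrow> s \<le> x" and st: "s < t" and tP: "t \<in> P" and P: "P \<subseteq> {x\<in>S. t \<le> x}"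
begin

lemma Diff_insert_eq_gaps: "S - insert s P = {x\<in>S. s < x \<and> x < t} \<union> ({x\<in>S. t \<le> x} - P)"
proof (intro equalityI subsetI)
  fix x assume "x \<in> S - insert s P"
  then show "x \<in> {x\<in>S. s < x \<and> x < t} \<union> ({x\<in>S. t \<le> x} - P)"
    using smin[of x] by (cases "x < t") auto
qed (use P st in auto)

lemma perfect_matching_split_gap:
  assumes N: "perfect_matching (S - insert s P) N" "encloses_none N (insert s P)"
  shows "perfect_matching {x\<in>S. s < x \<and> x < t} {q\<in>N. fst q < t}"
    and "perfect_matching ({x\<in>S. t \<le> x} - P) {q\<in>N. \<not> fst q < t}"
proof -
  have qin: "fst q \<in> S - insert s P" "snd q \<in> S - insert s P" "fst q < snd q" if "q \<in> N" for q
    using perfect_matching_chordD[OF N(1) that] by auto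
  have side: "fst q < t \<longleftrightarrow> snd q < t" if q: "q \<in> N" for q
  proof -
    have "\<not> (fst q < t \<and> t < snd q)" using N(2) q tP unfolding encloses_none_def by blast
    moreover have "fst q \<noteq> t" "snd q \<noteq> t" using qin[OF q] tP by auto
    ultimately show ?thesis using qin(3)[OF q] by auto
  qed
  show "perfect_matching {x\<in>S. s < x \<and> x < t} {q\<in>N. fst q < t}"
  proof (rule perfect_matchingI)
    fix q assume q: "q \<in> {q\<in>N. fst q < t}"
    then show "fst q < snd q \<and> fst q \<in> {x\<in>S. s < x \<and> x < t} \<and> snd q \<in> {x\<in>S. s < x \<and> x < t}"
      using qin[of q] side[of q] smin[of "fst q"] by auto
  next
    fix i assume i: "i \<in> {x\<in>S. s < x \<and> x < t}"
    then obtain q where q: "q \<in> N" "i \<in> chord_set q"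
      using perfect_matching_covers[OF N(1)] Diff_insert_eq_gaps by blast
    then have "fst q < t" using qin[OF q(1)] i side[OF q(1)] by (auto simp: chord_set_def)
    then show "\<exists>q\<in>{q\<in>N. fst q < t}. i \<in> chord_set q" using q by blast
  qed (use perfect_matching_chord_eq[OF N(1)] in blast)
  show "perfect_matching ({x\<in>S. t \<le> x} - P) {q\<in>N. \<not> fst q < t}"
  proof (rule perfect_matchingI)
    fix q assume "q \<in> {q\<in>N. \<not> fst q < t}"
    then show "fst q < snd q \<and> fst q \<in> {x\<in>S. t \<le> x} - P \<and> snd q \<in> {x\<in>S. t \<le> x} - P"
      using qin[of q] by auto
  next
    fix i assume i: "i \<in> {x\<in>S. t \<le> x} - P"
    then obtain q where q: "q \<in> N" "i \<in> chord_set q"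
      using perfect_matching_covers[OF N(1)] Diff_insert_eq_gaps by blast
    then have "\<not> fst q < t" using qin[OF q(1)] i side[OF q(1)] by (auto simp: chord_set_def)
    then show "\<exists>q\<in>{q\<in>N. \<not> fst q < t}. i \<in> chord_set q" using q by blast
  qed (use perfect_matching_chord_eq[OF N(1)] in blast)
qed

lemma gap_matching_Un:
  assumes N1: "perfect_matching {x\<in>S. s < x \<and> x < t} N1"
    and N2: "perfect_matching ({x\<in>S. t \<le> x} - P) N2" "encloses_none N2 P"
  shows "perfect_matching (S - insert s P) (N1 \<union> N2)" "encloses_none (N1 \<union> N2) (insert s P)"
proof -
  show "perfect_matching (S - insert s P) (N1 \<union> N2)"
    unfolding Diff_insert_eq_gaps by (rule perfect_matching_Un[OF N1 N2(1)]) auto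
  show "encloses_none (N1 \<union> N2) (insert s P)"
    unfolding encloses_none_def
  proof (intro ballI notI)
    fix q x assume q: "q \<in> N1 \<union> N2" and x: "x \<in> insert s P" and qx: "fst q < x \<and> x < snd q"
    show False
    proof (cases "q \<in> N1")
      case True
      then have "s < fst q" "snd q < t" using perfect_matching_chordD[OF N1 True] by auto
      then show False using x qx P by auto
    next
      case False
      then have "q \<in> N2" using q by auto
      then have "t \<le> fst q" "\<forall>y\<in>P. \<not> (fst q < y \<and> y < snd q)"
        using perfect_matching_chordD[OF N2(1)] N2(2) unfolding encloses_none_def by auto
      then show False using x qx st by auto
    qed
  qed
qed

lemma gap_count_insert:
  assumes fin: "finite S"
  shows "gap_count S (insert s P) =
    matching_count (card {x\<in>S. s < x \<and> x < t}) * gap_count {x\<in>S. t \<le> x} P"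
proof -
  let ?A = "{N1. perfect_matching {x\<in>S. s < x \<and> x < t} N1}"
  let ?B = "{N2. perfect_matching ({x\<in>S. t \<le> x} - P) N2 \<and> encloses_none N2 P}"
  have "bij_betw (\<lambda>(N1, N2). N1 \<union> N2) (?A \<times> ?B)
      {N. perfect_matching (S - insert s P) N \<and> encloses_none N (insert s P)}"
  proof (rule bij_betw_byWitness[where f' = "\<lambda>N. ({q\<in>N. fst q < t}, {q\<in>N. \<not> fst q < t})"])
    have "fst q < t" if "q \<in> N1" "N1 \<in> ?A" for q N1
      using perfect_matching_chordD that by fastforce
    moreover have "\<not> fst q < t" if "q \<in> N2" "N2 \<in> ?B" for q N2
      using perfect_matching_chordD that by fastforce
    ultimately show "\<forall>a\<in>?A \<times> ?B. (\<lambda>N. ({q\<in>N. fst q < t}, {q\<in>N. \<not> fst q < t})) ((\<lambda>(N1, N2). N1 \<union> N2) a) = a"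
      by fastforce
    show "(\<lambda>(N1, N2). N1 \<union> N2) ` (?A \<times> ?B) \<subseteq>
        {N. perfect_matching (S - insert s P) N \<and> encloses_none N (insert s P)}"
      using gap_matching_Un by auto
    show "(\<lambda>N. ({q\<in>N. fst q < t}, {q\<in>N. \<not> fst q < t})) `
        {N. perfect_matching (S - insert s P) N \<and> encloses_none N (insert s P)} \<subseteq> ?A \<times> ?B"
      using perfect_matching_split_gap encloses_none_def by auto
  qed auto
  then have "gap_count S (insert s P) = card (?A \<times> ?B)"
    unfolding gap_count_def by (simp add: bij_betw_same_card)
  also have "\<dots> = matching_count (card {x\<in>S. s < x \<and> x < t}) * gap_count {x\<in>S. t \<le> x} P"
    using fin by (simp add: card_cartesian_product card_perfect_matchings gap_count_def)
  finally show ?thesis .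
qed

end

lemma root_point_sets_Suc_Suc:
  assumes fin: "finite S" and ne: "S \<noteq> {}"
  shows "root_point_sets b S (Suc (Suc j)) =
    (\<Union>t\<in>S - {Min S}. insert (Min S) ` root_point_sets b {x\<in>S. t \<le> x} (Suc j))"
proof -
  define s where "s = Min S"
  have sS: "s \<in> S" and smin: "\<And>x. x \<in> S \<Longrightarrow> s \<le> x" using fin ne s_def by simp_all
  have minT: "Min {x\<in>S. t \<le> x} = t" if "t \<in> S" for t
    using that fin by (intro Min_eqI) auto
  have maxT: "Max {x\<in>S. t \<le> x} = Max S" if "t \<in> S" for t
    by (intro Max_eqI) (use that fin Max_ge[OF fin that] Max_in[OF fin ne] in auto)
  show ?thesis
  proof (intro equalityI subsetI)
    fix P assume P: "P \<in> root_point_sets b S (Suc (Suc j))"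
    have finP: "finite P" using P fin finite_subset by (auto simp: root_point_sets_def)
    have "card (P - {s}) = Suc j" using P s_def finP by (simp add: root_point_sets_def)
    then have ne': "P - {s} \<noteq> {}" by (intro notI) simp
    define t where "t = Min (P - {s})"
    have tP: "t \<in> P - {s}" unfolding t_def by (rule Min_in) (use ne' finP in auto)
    have tS: "t \<in> S - {s}" using tP P by (auto simp: root_point_sets_def)
    have "t \<le> Max S" using Max_ge[OF fin] tS by simp
    then have "Max S \<noteq> s" using smin[of t] tS by auto
    then have "P - {s} \<in> root_point_sets b {x\<in>S. t \<le> x} (Suc j)"
      using P finP t_def minT[of t] maxT[of t] tS tP \<open>card (P - {s}) = Suc j\<close>
      by (auto simp: root_point_sets_def)
    moreover have "P = insert s (P - {s})" using P s_def by (auto simp: root_point_sets_def)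
    ultimately show "P \<in> (\<Union>t\<in>S - {Min S}. insert (Min S) ` root_point_sets b {x\<in>S. t \<le> x} (Suc j))"
      using tS s_def by blast
  next
    fix P assume "P \<in> (\<Union>t\<in>S - {Min S}. insert (Min S) ` root_point_sets b {x\<in>S. t \<le> x} (Suc j))"
    then obtain t P' where t: "t \<in> S - {s}" and P': "P' \<in> root_point_sets b {x\<in>S. t \<le> x} (Suc j)"
      and PP: "P = insert s P'"
      unfolding s_def by blast
    have "s < t" using t smin[of t] by auto
    then have "s \<notin> P'" using P' by (auto simp: root_point_sets_def)
    moreover have "finite P'" using P' fin by (auto intro: rev_finite_subset simp: root_point_sets_def)
    ultimately have "card P = Suc (Suc j)" using P' PP by (simp add: root_point_sets_def)
    then show "P \<in> root_point_sets b S (Suc (Suc j))"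
      using P' PP sS s_def maxT[of t] t by (auto simp: root_point_sets_def)
  qed
qed

lemma finite_root_point_sets: "finite S \<Longrightarrow> finite (root_point_sets b S j)"
  unfolding root_point_sets_def by simp

lemma root_point_sets_tailD:
  assumes "finite S" "t \<in> S" "P \<in> root_point_sets b {x\<in>S. t \<le> x} j"
  shows "t \<in> P" "\<And>x. x \<in> P \<Longrightarrow> t \<le> x"
proof -
  have "Min {x\<in>S. t \<le> x} = t" using assms(1,2) by (intro Min_eqI) auto
  then show "t \<in> P" "\<And>x. x \<in> P \<Longrightarrow> t \<le> x" using assms(3) by (auto simp: root_point_sets_def)
qed

lemma sum_gap_count_insert_Min:
  assumes fin: "finite S" and t: "t \<in> S" "Min S < t"
  shows "(\<Sum>P\<in>insert (Min S) ` root_point_sets b {x\<in>S. t \<le> x} (Suc j). gap_count S P) =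
    matching_count (card {x\<in>S. Min S < x \<and> x < t}) * gap_sum b {x\<in>S. t \<le> x} (Suc j)"
proof -
  let ?PP = "root_point_sets b {x\<in>S. t \<le> x} (Suc j)"
  have smin: "\<And>x. x \<in> S \<Longrightarrow> Min S \<le> x" using fin by simp
  have notin: "Min S \<notin> P" if "P \<in> ?PP" for P
    using root_point_sets_tailD(2)[OF fin t(1) that] t(2) by force
  have "inj_on (insert (Min S)) ?PP"
  proof (rule inj_onI)
    fix A B assume "A \<in> ?PP" "B \<in> ?PP" "insert (Min S) A = insert (Min S) B"
    then show "A = B" using notin insert_ident[of "Min S" A B] by simp
  qed
  then have "(\<Sum>P\<in>insert (Min S) ` ?PP. gap_count S P) = (\<Sum>P\<in>?PP. gap_count S (insert (Min S) P))"
    by (rule sum.reindex[unfolded comp_def])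
  also have "\<dots> = (\<Sum>P\<in>?PP. matching_count (card {x\<in>S. Min S < x \<and> x < t}) * gap_count {x\<in>S. t \<le> x} P)"
  proof (rule sum.cong[OF refl])
    fix P assume P: "P \<in> ?PP"
    show "gap_count S (insert (Min S) P) =
        matching_count (card {x\<in>S. Min S < x \<and> x < t}) * gap_count {x\<in>S. t \<le> x} P"
      by (rule gap_count_insert[OF smin t(2) _ _ fin])
        (use root_point_sets_tailD[OF fin t(1) P] P in \<open>auto simp: root_point_sets_def\<close>)
  qed
  finally show ?thesis unfolding gap_sum_def sum_distrib_left .
qed

lemma gap_sum_Suc_Suc:
  assumes fin: "finite S" and ne: "S \<noteq> {}"
  shows "gap_sum b S (Suc (Suc j)) =
    (\<Sum>t\<in>S - {Min S}. matching_count (card {x\<in>S. Min S < x \<and> x < t}) * gap_sum b {x\<in>S. t \<le> x} (Suc j))"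
proof -
  let ?F = "\<lambda>t. insert (Min S) ` root_point_sets b {x\<in>S. t \<le> x} (Suc j)"
  have "gap_sum b S (Suc (Suc j)) = (\<Sum>P\<in>(\<Union>t\<in>S - {Min S}. ?F t). gap_count S P)"
    unfolding gap_sum_def root_point_sets_Suc_Suc[OF fin ne] ..
  also have "\<dots> = (\<Sum>t\<in>S - {Min S}. \<Sum>P\<in>?F t. gap_count S P)"
  proof (rule sum.UNION_disjoint)
    show "\<forall>t\<in>S - {Min S}. \<forall>t'\<in>S - {Min S}. t \<noteq> t' \<longrightarrow> ?F t \<inter> ?F t' = {}"
    proof (intro ballI impI equals0I)
      fix t t' P assume t: "t \<in> S - {Min S}" and t': "t' \<in> S - {Min S}" and "t \<noteq> t'"
        and "P \<in> ?F t \<inter> ?F t'"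
      then obtain A B where A: "A \<in> root_point_sets b {x\<in>S. t \<le> x} (Suc j)"
        and B: "B \<in> root_point_sets b {x\<in>S. t' \<le> x} (Suc j)" and "insert (Min S) A = insert (Min S) B"
        by blast
      moreover have "Min S \<notin> A" "Min S \<notin> B"
        using root_point_sets_tailD(2)[OF fin _ A] root_point_sets_tailD(2)[OF fin _ B] t t' fin
        by (metis DiffE Min_le insertI1 le_antisym)+
      ultimately have "A = B" using insert_ident[of "Min S" A B] by simp
      then have "t \<le> t'" "t' \<le> t"
        using root_point_sets_tailD[OF fin _ A] root_point_sets_tailD[OF fin _ B] t t' by auto
      then show False using \<open>t \<noteq> t'\<close> by simp
    qed
  qed (simp_all add: fin finite_root_point_sets)
  also have "\<dots> = (\<Sum>t\<in>S - {Min S}. matching_count (card {x\<in>S. Min S < x \<and> x < t}) *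
      gap_sum b {x\<in>S. t \<le> x} (Suc j))"
    using fin by (intro sum.cong refl sum_gap_count_insert_Min) (auto simp: order.not_eq_order_implies_strict)
  finally show ?thesis .
qed

section \<open>Generating functions in the number of points\<close>

text \<open>The \<open>point_\<close> series are indexed by the number of points, twice the number of chords.\<close>

definition point_matching_fps :: "rat fps" where
  "point_matching_fps = Abs_fps (\<lambda>n. of_nat (matching_count n))"

text \<open>A root point set of size \<open>j\<close> cuts the remaining points into \<open>j - 1\<close> gaps between consecutive
  root points and a tail after the last one, each matched independently; the tail is empty
  when \<open>b\<close> holds.\<close>

definition gap_fps :: "nat \<Rightarrow> rat fps" where
  "gap_fps j = (if j = 0 then 0 else fps_X ^ j * point_matching_fps ^ (j - 1))"

lemma gap_fps_nth_below: "a < j \<Longrightarrow> gap_fps j $ a = 0"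
  unfolding gap_fps_def by (simp add: fps_X_power_mult_nth)

lemma gap_fps_Suc_Suc_nth:
  "(gap_fps (Suc (Suc k)) * F) $ Suc L = (\<Sum>a<L. of_nat (matching_count a) * (gap_fps (Suc k) * F) $ (L - a))"
proof -
  let ?G = "gap_fps (Suc k) * F"
  have "gap_fps (Suc (Suc k)) * F = fps_X * (point_matching_fps * ?G)"
    unfolding gap_fps_def by (simp add: mult_ac)
  then have "(gap_fps (Suc (Suc k)) * F) $ Suc L = (fps_X * (point_matching_fps * ?G)) $ Suc L"
    by (simp only:)
  also have "\<dots> = (point_matching_fps * ?G) $ L"
    by simp
  also have "\<dots> = (\<Sum>i=0..L. point_matching_fps $ i * ?G $ (L - i))"
    by (rule fps_mult_nth)
  also have "\<dots> = (\<Sum>i<L. point_matching_fps $ i * ?G $ (L - i))"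
  proof -
    have "?G $ 0 = 0" using gap_fps_nth_below[of 0 "Suc k"] by (simp add: fps_mult_nth)
    then show ?thesis by (simp add: atLeast0AtMost lessThan_Suc_atMost[symmetric])
  qed
  finally show ?thesis by (simp add: point_matching_fps_def)
qed

lemma of_nat_gap_sum:
  "finite S \<Longrightarrow> S \<noteq> {} \<Longrightarrow>
    of_nat (gap_sum b S j) = (gap_fps j * (if b then 1 else point_matching_fps)) $ card S"
proof (induction j arbitrary: S rule: less_induct)
  case (less j)
  note fin = less.prems(1) and ne = less.prems(2)
  obtain L where L: "card S = Suc L" using fin ne by (metis card_gt_0_iff gr0_implies_Suc)
  consider "j = 0" | "j = 1" | k where "j = Suc (Suc k)" by (metis One_nat_def not0_implies_Suc)
  then show ?case
  proof cases
    case 1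
    then show ?thesis using gap_sum_0[OF fin] by (simp add: gap_fps_def)
  next
    case 2
    then show ?thesis using gap_sum_1[OF fin ne] L by (auto simp: gap_fps_def point_matching_fps_def)
  next
    case (3 k)
    define s where "s = Min S"
    have sS: "s \<in> S" and smin: "\<And>x. x \<in> S \<Longrightarrow> s \<le> x" using fin ne s_def by simp_all
    let ?G = "\<lambda>t. {x\<in>S. s < x \<and> x < t}" and ?T = "\<lambda>t. {x\<in>S. t \<le> x}"
    let ?F = "if b then 1 else point_matching_fps"
    have G_rank: "card (?G t) = rank_in (S - {s}) t" for t
      unfolding rank_in_def using smin by (intro arg_cong[where f=card]) force
    have T_card: "card (?T t) = L - card (?G t)" if t: "t \<in> S - {s}" for t
    proof -
      have "S - {s} = ?G t \<union> ?T t" "?G t \<inter> ?T t = {}" using t smin by force+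
      then have "card (S - {s}) = card (?G t) + card (?T t)" using fin by (simp add: card_Un_disjoint)
      then show ?thesis using L sS fin by simp
    qed
    have "of_nat (gap_sum b S j) =
        (\<Sum>t\<in>S - {s}. of_nat (matching_count (card (?G t))) * of_nat (gap_sum b (?T t) (Suc k)) :: rat)"
      using gap_sum_Suc_Suc[OF fin ne, of b k] 3 s_def by simp
    also have "\<dots> = (\<Sum>t\<in>S - {s}. of_nat (matching_count (card (?G t))) * (gap_fps (Suc k) * ?F) $ card (?T t))"
      using 3 fin by (intro sum.cong refl) (subst less.IH, auto)
    also have "\<dots> = (\<Sum>t\<in>S - {s}. (\<lambda>a. of_nat (matching_count a) * (gap_fps (Suc k) * ?F) $ (L - a)) (rank_in (S - {s}) t))"
      using T_card G_rank by (intro sum.cong refl) simp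
    also have "\<dots> = (\<Sum>a<card (S - {s}). of_nat (matching_count a) * (gap_fps (Suc k) * ?F) $ (L - a))"
      by (rule sum.reindex_bij_betw[OF bij_betw_rank_in]) (use fin in simp)
    also have "\<dots> = (gap_fps j * ?F) $ card S"
      using gap_fps_Suc_Suc_nth[of k ?F L] L 3 sS fin by simp
    finally show ?thesis .
  qed
qed

lemma of_nat_card_matchings_by_root:
  assumes "L \<ge> 1"
  shows "of_nat (card {M. perfect_matching {1..L} M \<and> (b \<longrightarrow> L \<in> points (root_component 1 M))}) =
         (\<Sum>j\<le>L. of_nat (connected_count j) * (gap_fps j * (if b then 1 else point_matching_fps)) $ L)"
proof -
  have ne: "{1..L} \<noteq> {}" using assms by simp
  have mm: "Min {1..L} = 1" "Max {1..L} = L"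
    by ((rule Min_eqI | rule Max_eqI); use assms in auto)+
  have "card {M. perfect_matching {1..L} M \<and> (b \<longrightarrow> L \<in> points (root_component 1 M))} =
      (\<Sum>j\<le>L. connected_count j * gap_sum b {1..L} j)"
    using card_matchings_by_root_size[OF _ ne, of b] unfolding mm by simp
  then show ?thesis using of_nat_gap_sum[OF _ ne, of b] by simp
qed

section \<open>Indecomposable diagrams\<close>

lemma perfect_matching_below_root_component:
  assumes M: "perfect_matching {1..m} M" and m: "m \<ge> 1"
    and p: "p = Max (points (root_component 1 M))"
  shows "perfect_matching {1..p} {c\<in>M. snd c \<le> p}"
proof -
  let ?S = "{1..m}" and ?R = "root_component 1 M"
  have sS: "(1::nat) \<in> ?S" using m by simp
  have smin: "\<And>x. x \<in> ?S \<Longrightarrow> 1 \<le> x" by simp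
  note root = points_root_component_subset[OF sS smin M] in_points_root_component[OF sS smin M]
    perfect_matching_root_component[OF sS smin M] perfect_matching_outside_root_component[OF sS smin M]
    encloses_none_outside_root_component[OF sS smin M]
  have finP: "finite (points ?R)" using root(1) finite_subset by blast
  have pP: "p \<in> points ?R" and pge: "\<And>x. x \<in> points ?R \<Longrightarrow> x \<le> p"
    using p finP root(2) by (auto intro: Max_in)
  have pm: "p \<le> m" using pP root(1) by auto
  show ?thesis
  proof (rule perfect_matchingI)
    fix c assume "c \<in> {c\<in>M. snd c \<le> p}"
    then show "fst c < snd c \<and> fst c \<in> {1..p} \<and> snd c \<in> {1..p}"
      using perfect_matching_chordD[OF M, of c] by auto
  next
    fix i assume i: "i \<in> {1..p}"
    then obtain c where c: "c \<in> M" "i \<in> chord_set c" using perfect_matching_covers[OF M] pm by force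
    have ci: "fst c \<le> i" "fst c < snd c" using c perfect_matching_chordD[OF M c(1)] by (auto simp: chord_set_def)
    have "snd c \<le> p"
    proof (cases "c \<in> ?R")
      case True
      then show ?thesis using perfect_matching_chordD[OF root(3) True] pge by auto
    next
      case False
      then have cr: "c \<in> M - ?R" using c by simp
      have "fst c \<noteq> p" using perfect_matching_chordD[OF root(4) cr] pP by auto
      then have "fst c < p" using ci i by auto
      moreover have "\<not> (fst c < p \<and> p < snd c)" using root(5) cr pP unfolding encloses_none_def by blast
      ultimately show ?thesis by simp
    qed
    then show "\<exists>c\<in>{c\<in>M. snd c \<le> p}. i \<in> chord_set c" using c by blast
  qed (use perfect_matching_chord_eq[OF M] in blast)
qed

lemma root_component_covers_if_indecomposable:
  assumes n: "n \<ge> 1" and M: "perfect_matching {1..2*n} M" and ind: "indecomposable_cd n M"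
  shows "2*n \<in> points (root_component 1 M)"
proof (rule ccontr)
  let ?P = "points (root_component 1 M)"
  assume nP: "2*n \<notin> ?P"
  let ?S = "{1..2*n}"
  have sS: "(1::nat) \<in> ?S" using n by simp
  have smin: "\<And>x. x \<in> ?S \<Longrightarrow> 1 \<le> x" by simp
  have Psub: "?P \<subseteq> {1..2*n}" and oneP: "1 \<in> ?P"
    using points_root_component_subset[OF sS smin M] in_points_root_component[OF sS smin M] by simp_all
  define p where "p = Max ?P"
  have "finite ?P" using Psub finite_subset by blast
  then have "p \<in> ?P" "1 \<le> p" using oneP p_def by (auto intro: Max_in)
  then have p: "1 \<le> p" "p < 2*n" using Psub nP by (metis atLeastAtMost_iff le_neq_implies_less subsetD)+
  have pm: "perfect_matching {1..p} {c\<in>M. snd c \<le> p}"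
    using perfect_matching_below_root_component[OF M _ p_def] n by simp
  have "matching_count p \<noteq> 0"
  proof
    assume "matching_count p = 0"
    then have "{M. perfect_matching {1..p} M} = {}"
      using card_perfect_matchings[of "{1..p}"] finite_perfect_matchings[of "{1..p}"] by simp
    then show False using pm by blast
  qed
  then have "even p" using matching_count_odd by (metis oddE)
  then obtain k where k: "p = 2 * k" by (rule evenE)
  have "0 < k" "k < n" using k p by auto
  moreover have "{c\<in>M. snd c \<le> p} \<subseteq> M" by auto
  moreover have "\<Union> (chord_set ` {c\<in>M. snd c \<le> p}) = {1..2*k}"
    using points_perfect_matching[OF pm] k unfolding points_def by simp
  ultimately show False using ind unfolding indecomposable_cd_def by blast
qed

lemma indecomposable_if_root_component_covers:
  assumes n: "n \<ge> 1" and M: "perfect_matching {1..2*n} M" and nP: "2*n \<in> points (root_component 1 M)"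
  shows "indecomposable_cd n M"
  unfolding indecomposable_cd_def
proof (intro conjI notI)
  let ?R = "root_component 1 M"
  let ?S = "{1..2*n}"
  have sS: "(1::nat) \<in> ?S" using n by simp
  have smin: "\<And>x. x \<in> ?S \<Longrightarrow> 1 \<le> x" by simp
  show "n \<ge> 1" using n .
  assume "\<exists>k. 0 < k \<and> k < n \<and> (\<exists>S'\<subseteq>M. \<Union> (chord_set ` S') = {1..2*k})"
  then obtain k S' where k: "0 < k" "k < n" and S': "S' \<subseteq> M" "\<Union> (chord_set ` S') = {1..2*k}" by blast
  have split: "snd c \<le> 2*k \<or> 2*k < fst c" if c: "c \<in> M" for c
  proof (rule ccontr)
    assume nt: "\<not> (snd c \<le> 2*k \<or> 2*k < fst c)"
    then have "fst c \<in> \<Union> (chord_set ` S')" using S'(2) perfect_matching_chordD[OF M c] by simp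
    then obtain d where d: "d \<in> S'" "fst c \<in> chord_set d" by blast
    have "c = d" using perfect_matching_chord_eq[OF M c, of d "fst c"] d S' by (auto simp: chord_set_def)
    then have "snd c \<in> {1..2*k}" using d S'(2) by (auto simp: chord_set_def)
    then show False using nt by simp
  qed
  have RM: "?R \<subseteq> M" using root_component_subset[OF sS smin M] .
  obtain p where p: "p \<in> ?R" "1 \<in> chord_set p"
    using root_chord[OF sS smin M] root_chord_in_root_component[OF sS smin M] by blast
  obtain q where q: "q \<in> ?R" "2*n \<in> chord_set q" using nP unfolding points_def by blast
  have "fst p \<le> 1" using p(2) perfect_matching_chordD[OF M, of p] RM p(1) by (auto simp: chord_set_def)
  then have Qp: "snd p \<le> 2*k" using split[of p] RM p(1) k by auto
  have "2*n \<le> snd q" using q(2) perfect_matching_chordD[OF M, of q] RM q(1) by (auto simp: chord_set_def)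
  then have Qq: "\<not> snd q \<le> 2*k" using k by auto
  obtain c r where cr: "c \<in> ?R" "r \<in> ?R" "crosses c r" "snd c \<le> 2*k" "\<not> snd r \<le> 2*k"
    using connected_cd_crossing_between[OF connected_root_component[OF sS smin M] p(1) q(1),
        of "\<lambda>c. snd c \<le> 2*k"] Qp Qq by blast
  have "2*k < fst r" using split[of r] cr RM by auto
  moreover have "fst c < snd c" using cr RM perfect_matching_chordD[OF M] by auto
  ultimately show False using cr(3,4) unfolding crosses_def by auto
qed

lemma indecomposable_iff_root_component_covers:
  "n \<ge> 1 \<Longrightarrow> perfect_matching {1..2*n} M \<Longrightarrow>
    indecomposable_cd n M \<longleftrightarrow> 2*n \<in> points (root_component 1 M)"
  using root_component_covers_if_indecomposable indecomposable_if_root_component_covers by blast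

section \<open>Functional equations for chord diagrams\<close>

definition point_connected_fps :: "rat fps" where
  "point_connected_fps = Abs_fps (\<lambda>j. of_nat (connected_count j))"

definition point_rooted_fps :: "rat fps" where
  "point_rooted_fps = Abs_fps (\<lambda>L. if L = 0 then 0 else
     of_nat (card {M. perfect_matching {1..L} M \<and> L \<in> points (root_component 1 M)}))"

definition diagram_fps :: "rat fps" where
  "diagram_fps = Abs_fps (\<lambda>n. of_nat (matching_count (2 * n)))"

lemma point_matching_fps_connected_eq:
  "point_matching_fps = 1 + (point_connected_fps oo (fps_X * point_matching_fps))"
proof (rule fps_ext)
  fix n
  show "point_matching_fps $ n = (1 + (point_connected_fps oo (fps_X * point_matching_fps))) $ n"
  proof (cases "n = 0")
    case True
    then show ?thesis by (simp add: point_matching_fps_def point_connected_fps_def connected_count_0)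
  next
    case False
    have "point_matching_fps $ n =
        of_nat (card {M. perfect_matching {1..n} M \<and> (False \<longrightarrow> n \<in> points (root_component 1 M))})"
      unfolding point_matching_fps_def using card_perfect_matchings[of "{1..n}"] by simp
    also have "\<dots> = (\<Sum>j\<le>n. of_nat (connected_count j) * (gap_fps j * point_matching_fps) $ n)"
      using of_nat_card_matchings_by_root[of n False] False by simp
    also have "\<dots> = (\<Sum>j=0..n. point_connected_fps $ j * ((fps_X * point_matching_fps) ^ j) $ n)"
    proof (rule sum.cong)
      fix j
      have "gap_fps j * point_matching_fps = (if j = 0 then 0 else (fps_X * point_matching_fps) ^ j)"
        unfolding gap_fps_def by (cases j) (simp_all add: power_mult_distrib mult_ac)
      then show "of_nat (connected_count j) * (gap_fps j * point_matching_fps) $ n =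
          point_connected_fps $ j * ((fps_X * point_matching_fps) ^ j) $ n"
        by (simp add: point_connected_fps_def connected_count_0)
    qed auto
    also have "\<dots> = (point_connected_fps oo (fps_X * point_matching_fps)) $ n"
      by (simp add: fps_compose_nth)
    finally show ?thesis using False by simp
  qed
qed

lemma point_matching_fps_rooted_eq: "point_matching_fps = 1 + point_rooted_fps * point_matching_fps"
proof (rule fps_ext)
  fix L
  show "point_matching_fps $ L = (1 + point_rooted_fps * point_matching_fps) $ L"
  proof (cases "L = 0")
    case True
    then show ?thesis by (simp add: point_matching_fps_def point_rooted_fps_def fps_mult_nth)
  next
    case False
    define T where "T = (\<Sum>j\<le>L. fps_const (of_nat (connected_count j)) * gap_fps j)"
    have "point_matching_fps $ L =
        of_nat (card {M. perfect_matching {1..L} M \<and> (False \<longrightarrow> L \<in> points (root_component 1 M))})"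
      unfolding point_matching_fps_def using card_perfect_matchings[of "{1..L}"] by simp
    also have "\<dots> = (\<Sum>j\<le>L. of_nat (connected_count j) * (gap_fps j * point_matching_fps) $ L)"
      using of_nat_card_matchings_by_root[of L False] False by simp
    also have "\<dots> = (T * point_matching_fps) $ L"
      unfolding T_def sum_distrib_right fps_sum_nth mult.assoc by simp
    also have "\<dots> = (point_rooted_fps * point_matching_fps) $ L"
      unfolding fps_mult_nth
    proof (rule sum.cong[OF refl])
      fix a assume "a \<in> {0..L}"
      have "T $ a = (\<Sum>j\<le>L. of_nat (connected_count j) * gap_fps j $ a)"
        unfolding T_def fps_sum_nth by simp
      also have "\<dots> = (\<Sum>j\<le>a. of_nat (connected_count j) * gap_fps j $ a)"
        by (rule sum.mono_neutral_right) (use \<open>a \<in> {0..L}\<close> gap_fps_nth_below in auto)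
      also have "\<dots> = point_rooted_fps $ a"
        using of_nat_card_matchings_by_root[of a True] gap_fps_nth_below[of 0]
        by (cases "a = 0") (simp_all add: point_rooted_fps_def connected_count_0)
      finally show "T $ a * point_matching_fps $ (L - a) = point_rooted_fps $ a * point_matching_fps $ (L - a)"
        by simp
    qed
    finally show ?thesis using False by simp
  qed
qed

lemma fps_compose_X2_nth:
  "(F oo fps_X ^ 2) $ L = (if even L then F $ (L div 2) else (0::'a::idom))"
proof -
  have "(F oo fps_X ^ 2) $ L = (\<Sum>i=0..L. F $ i * (if L = 2 * i then 1 else 0))"
    unfolding fps_compose_nth by (simp add: power_mult[symmetric])
  also have "\<dots> = (\<Sum>i=0..L. if i = L div 2 \<and> even L then F $ i else 0)"
    by (intro sum.cong refl) auto
  also have "\<dots> = (if even L then F $ (L div 2) else 0)"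
    by (cases "even L") (simp_all add: sum.delta)
  finally show ?thesis .
qed

lemma fps_compose_X2_cancel: "(F :: 'a::idom fps) oo fps_X ^ 2 = G oo fps_X ^ 2 \<Longrightarrow> F = G"
proof (rule fps_ext)
  fix n assume "F oo fps_X ^ 2 = G oo fps_X ^ 2"
  then have "(F oo fps_X ^ 2) $ (2 * n) = (G oo fps_X ^ 2) $ (2 * n)" by simp
  then show "F $ n = G $ n" unfolding fps_compose_X2_nth by simp
qed

lemma fps_eq_compose_X2I:
  assumes "\<And>k. F $ (2 * k) = (G :: 'a::idom fps) $ k" "\<And>k. F $ (2 * k + 1) = 0"
  shows "F = G oo fps_X ^ 2"
proof (rule fps_ext)
  fix L show "F $ L = (G oo fps_X ^ 2) $ L"
    using assms by (cases "even L") (auto simp: fps_compose_X2_nth elim!: evenE oddE)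
qed

lemma point_matching_fps_eq_diagram: "point_matching_fps = diagram_fps oo fps_X ^ 2"
  by (rule fps_eq_compose_X2I) (simp_all add: point_matching_fps_def diagram_fps_def matching_count_odd[simplified])

lemma point_connected_fps_eq: "point_connected_fps = C_gf oo fps_X ^ 2"
proof (rule fps_eq_compose_X2I)
  fix k
  show "point_connected_fps $ (2 * k) = C_gf $ k"
    unfolding C_gf_def point_connected_fps_def chord_diagram_iff_perfect_matching
    using card_connected_matchings[of "{1..2*k}"] by simp
qed (simp add: point_connected_fps_def connected_count_odd[simplified])

lemma point_rooted_fps_eq: "point_rooted_fps = I0_gf oo fps_X ^ 2"
proof (rule fps_eq_compose_X2I)
  fix k
  show "point_rooted_fps $ (2 * k) = I0_gf $ k"
  proof (cases "k = 0")
    case False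
    then have "{M. chord_diagram k M \<and> indecomposable_cd k M} =
        {M. perfect_matching {1..2*k} M \<and> 2*k \<in> points (root_component 1 M)}"
      using indecomposable_iff_root_component_covers[of k] unfolding chord_diagram_iff_perfect_matching
      by auto
    then show ?thesis using False by (simp add: I0_gf_def point_rooted_fps_def)
  qed (simp add: I0_gf_def point_rooted_fps_def indecomposable_cd_def)
  have "card {M. perfect_matching {1..2*k+1} M \<and> 2*k+1 \<in> points (root_component 1 M)}
      \<le> card {M. perfect_matching {1..2*k+1} M}"
    by (rule card_mono[OF finite_perfect_matchings]) auto
  then show "point_rooted_fps $ (2 * k + 1) = 0"
    using card_perfect_matchings[of "{1..2*k+1}"] matching_count_odd[of k]
    by (simp add: point_rooted_fps_def)
qed

lemma diagram_fps_connected_eq: "diagram_fps = (1 + C_gf) oo (fps_X * diagram_fps ^ 2)"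
proof (rule fps_compose_X2_cancel)
  have X2: "(fps_X ^ 2 :: rat fps) $ 0 = 0" "(fps_X * point_matching_fps) $ 0 = 0"
    "(fps_X * diagram_fps ^ 2) $ 0 = 0" by simp_all
  have sq: "fps_X ^ 2 oo (fps_X * point_matching_fps) = (fps_X * diagram_fps ^ 2) oo fps_X ^ 2"
  proof -
    have "fps_X ^ 2 oo (fps_X * point_matching_fps) = (fps_X * point_matching_fps) ^ 2"
      by (rule fps_X_power_compose[OF X2(2)])
    also have "\<dots> = fps_X ^ 2 * (diagram_fps oo fps_X ^ 2) ^ 2"
      by (simp add: point_matching_fps_eq_diagram power_mult_distrib)
    also have "\<dots> = (fps_X oo fps_X ^ 2) * (diagram_fps ^ 2 oo fps_X ^ 2)"
      by (simp add: fps_compose_power[OF X2(1)])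
    also have "\<dots> = (fps_X * diagram_fps ^ 2) oo fps_X ^ 2"
      by (rule fps_compose_mult_distrib[OF X2(1), symmetric])
    finally show ?thesis .
  qed
  have "diagram_fps oo fps_X ^ 2 = 1 + (point_connected_fps oo (fps_X * point_matching_fps))"
    using point_matching_fps_connected_eq point_matching_fps_eq_diagram by simp
  also have "\<dots> = 1 + (C_gf oo (fps_X ^ 2 oo (fps_X * point_matching_fps)))"
    unfolding point_connected_fps_eq by (simp add: fps_compose_assoc[OF X2(2,1)])
  also have "\<dots> = 1 + ((C_gf oo (fps_X * diagram_fps ^ 2)) oo fps_X ^ 2)"
    unfolding sq by (simp add: fps_compose_assoc[OF X2(1,3)])
  finally show "diagram_fps oo fps_X ^ 2 = ((1 + C_gf) oo (fps_X * diagram_fps ^ 2)) oo fps_X ^ 2"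
    by (simp add: fps_compose_add_distrib)
qed

lemma diagram_fps_indecomposable_eq: "diagram_fps = 1 + I0_gf * diagram_fps"
proof (rule fps_compose_X2_cancel)
  have X2: "(fps_X ^ 2 :: rat fps) $ 0 = 0" by simp
  have "diagram_fps oo fps_X ^ 2 = 1 + point_rooted_fps * point_matching_fps"
    using point_matching_fps_rooted_eq point_matching_fps_eq_diagram by simp
  also have "\<dots> = (1 + I0_gf * diagram_fps) oo fps_X ^ 2"
    unfolding point_rooted_fps_eq point_matching_fps_eq_diagram
    by (simp add: fps_compose_add_distrib fps_compose_mult_distrib[OF X2])
  finally show "diagram_fps oo fps_X ^ 2 = (1 + I0_gf * diagram_fps) oo fps_X ^ 2" .
qed

lemma diagram_fps_nth_0: "diagram_fps $ 0 = 1"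
  by (simp add: diagram_fps_def)

lemma diagram_fps_nth_Suc: "diagram_fps $ Suc n = of_nat (2 * n + 1) * diagram_fps $ n"
proof -
  have "matching_count (2 * Suc n) = (2 * n + 1) * matching_count (2 * n)"
    by (simp add: numeral_2_eq_2)
  then show ?thesis unfolding diagram_fps_def by (simp only: fps_nth_Abs_fps of_nat_mult)
qed

section \<open>Lagrange inversion\<close>

text \<open>With \<open>w = u\<^sup>-\<^sup>k\<^sup>-\<^sup>1\<close> one has \<open>(x u)' u\<^sup>-\<^sup>k\<^sup>-\<^sup>2 = w - x w' / (k + 1)\<close>,
  whose coefficient of \<open>x\<^sup>k\<^sup>+\<^sup>1\<close> vanishes.\<close>

lemma deriv_X_mult_inverse_power_nth:
  fixes u :: "'a::field_char_0 fps"
  assumes u0: "u $ 0 = 1"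
  shows "(fps_deriv (fps_X * u) * inverse u ^ (k + 2)) $ (k + 1) = 0"
proof -
  define v where "v = inverse u"
  define w where "w = v ^ (k + 1)"
  define G where "G = fps_deriv u * v ^ (k + 2)"
  have uv: "u * v = 1" unfolding v_def by (rule inverse_mult_eq_1') (simp add: u0)
  have dv: "fps_deriv v = - fps_deriv u * v ^ 2"
    unfolding v_def by (rule fps_inverse_deriv) (simp add: u0)
  have dw: "fps_deriv w = - (fps_const (of_nat (k + 1)) * G)"
  proof -
    have "fps_deriv w = - (fps_const (of_nat (k + 1)) * (fps_deriv u * (v ^ 2 * v ^ k)))"
      unfolding w_def fps_deriv_power dv by (simp add: mult_ac)
    then show ?thesis unfolding G_def by (simp add: power_add[symmetric] add.commute)
  qed
  have "fps_deriv (fps_X * u) * v ^ (k + 2) = (u * v) * v ^ (k + 1) + fps_X * G"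
    unfolding G_def by (simp add: algebra_simps power_Suc)
  then have yd: "fps_deriv (fps_X * u) * v ^ (k + 2) = w + fps_X * G" using uv w_def by simp
  have "of_nat (k + 1) * w $ (k + 1) = - (of_nat (k + 1) * G $ k)"
    using arg_cong[OF dw, of "\<lambda>f. f $ k"] by simp
  then have "of_nat (k + 1) * (w $ (k + 1) + G $ k) = 0" by (simp add: algebra_simps)
  then have "w $ (k + 1) + G $ k = 0" by (simp del: of_nat_Suc)
  then show ?thesis using yd unfolding v_def by simp
qed

lemma X_mult_power_deriv_inverse_power_nth:
  fixes u :: "'a::field_char_0 fps"
  assumes u0: "u $ 0 = 1" and j: "j \<le> n"
  shows "((fps_X * u) ^ j * (fps_deriv (fps_X * u) * inverse u ^ (n + 1))) $ n = (if j = n then 1 else 0)"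
proof -
  define dy where "dy = fps_deriv (fps_X * u)"
  have "inverse u ^ (n + 1) = inverse u ^ j * inverse u ^ (n + 1 - j)"
    using j by (simp add: power_add[symmetric])
  moreover have "u ^ j * inverse u ^ j = 1"
    using u0 by (simp add: power_mult_distrib[symmetric] inverse_mult_eq_1')
  ultimately have "(fps_X * u) ^ j * (dy * inverse u ^ (n + 1)) = fps_X ^ j * (dy * inverse u ^ (n + 1 - j))"
    by (simp add: power_mult_distrib mult_ac)
  then have "((fps_X * u) ^ j * (dy * inverse u ^ (n + 1))) $ n = (fps_X ^ j * (dy * inverse u ^ (n + 1 - j))) $ n"
    by (simp only:)
  also have "\<dots> = (dy * inverse u ^ (n + 1 - j)) $ (n - j)"
    using j by (simp add: fps_X_power_mult_nth)
  also have "\<dots> = (if j = n then 1 else 0)"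
  proof (cases "j = n")
    case True
    then show ?thesis using u0 by (simp add: fps_mult_nth dy_def)
  next
    case False
    then have "n - j = (n - j - 1) + 1" "n + 1 - j = (n - j - 1) + 2" using j by simp_all
    then show ?thesis
      using deriv_X_mult_inverse_power_nth[OF u0, of "n - j - 1"] False by (simp add: dy_def)
  qed
  finally show ?thesis unfolding dy_def .
qed

lemma fps_eq_sum_plus_X_power_shift:
  fixes F :: "'a::comm_ring_1 fps"
  shows "F = (\<Sum>j\<le>n. fps_const (F $ j) * fps_X ^ j) + fps_X ^ (n + 1) * fps_shift (n + 1) F"
proof (rule fps_ext)
  fix i
  have "(\<Sum>j\<le>n. fps_const (F $ j) * fps_X ^ j) $ i = (\<Sum>j\<le>n. if i = j then F $ j else 0)"
    unfolding fps_sum_nth by (intro sum.cong refl) simp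
  also have "\<dots> = (if i \<le> n then F $ i else 0)" by (simp add: sum.delta)
  moreover have "(fps_X ^ (n + 1) * fps_shift (n + 1) F) $ i = (if i < n + 1 then 0 else F $ i)"
    unfolding fps_X_power_mult_nth by simp
  ultimately show "F $ i = ((\<Sum>j\<le>n. fps_const (F $ j) * fps_X ^ j) + fps_X ^ (n + 1) * fps_shift (n + 1) F) $ i"
    by (simp only: fps_add_nth) auto
qed

text \<open>Write \<open>\<phi>\<^sup>n(y) = u\<^sup>n\<close> for \<open>y = x u\<close> and multiply by \<open>y' / u\<^sup>n\<^sup>+\<^sup>1\<close>:
  the term \<open>y\<^sup>j y' / u\<^sup>n\<^sup>+\<^sup>1 = x\<^sup>j y' / u\<^sup>n\<^sup>+\<^sup>1\<^sup>-\<^sup>j\<close> contributes to \<open>[x\<^sup>n]\<close> only for \<open>j = n\<close>.\<close>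

lemma lagrange_inversion_diagonal:
  fixes phi u :: "'a::field_char_0 fps"
  assumes u0: "u $ 0 = 1" and comp: "phi oo (fps_X * u) = u"
  shows "(phi ^ n) $ n = (fps_deriv (fps_X * u) * inverse u) $ n"
proof -
  define y where "y = fps_X * u"
  define v where "v = inverse u"
  define F where "F = phi ^ n"
  define Rest where "Rest = fps_shift (n + 1) F oo y"
  define dy where "dy = fps_deriv y"
  have y0: "y $ 0 = 0" unfolding y_def by simp
  have uvp: "u ^ j * v ^ j = 1" for j
    by (metis inverse_mult_eq_1' power_mult_distrib power_one u0 v_def zero_neq_one)
  have "u ^ n = F oo y" unfolding F_def using fps_compose_power[OF y0, of phi n] comp y_def by simp
  also have "\<dots> = (\<Sum>j\<le>n. fps_const (F $ j) * y ^ j) + y ^ (n + 1) * Rest"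
    by (subst fps_eq_sum_plus_X_power_shift[of F n])
      (simp add: fps_compose_add_distrib fps_compose_sum_distrib fps_compose_mult_distrib[OF y0]
         Rest_def fps_X_power_compose[OF y0] fps_X_fps_compose_startby0[OF y0])
  finally have expand: "u ^ n = (\<Sum>j\<le>n. fps_const (F $ j) * y ^ j) + y ^ (n + 1) * Rest" .
  have term_nth: "(fps_const (F $ j) * y ^ j * (dy * v ^ (n + 1))) $ n = (if j = n then F $ n else 0)"
    if j: "j \<le> n" for j
    using X_mult_power_deriv_inverse_power_nth[OF u0 j]
    by (simp add: mult.assoc fps_mult_left_const_nth y_def dy_def v_def)
  have rest_nth: "(y ^ (n + 1) * Rest * (dy * v ^ (n + 1))) $ n = 0"
  proof -
    have "y ^ (n + 1) * Rest * (dy * v ^ (n + 1)) = fps_X ^ (n + 1) * (u ^ (n + 1) * Rest * (dy * v ^ (n + 1)))"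
      unfolding y_def power_mult_distrib by (simp only: mult_ac)
    then show ?thesis by (simp only: fps_X_power_mult_nth) simp
  qed
  have "(dy * v) $ n = (u ^ n * (dy * v ^ (n + 1))) $ n"
    using uvp[of n] by (simp add: mult_ac power_Suc)
  also have "\<dots> = (\<Sum>j\<le>n. (fps_const (F $ j) * y ^ j * (dy * v ^ (n + 1))) $ n)"
    unfolding expand distrib_right using rest_nth by (simp add: sum_distrib_right fps_sum_nth)
  also have "\<dots> = (\<Sum>j\<le>n. if j = n then F $ n else 0)" using term_nth by (intro sum.cong refl) simp
  also have "\<dots> = F $ n" by simp
  finally show ?thesis unfolding F_def dy_def y_def v_def by simp
qed

text \<open>At the first index \<open>m\<close> where \<open>A\<close> and \<open>B\<close> differ,
  \<open>[x\<^sup>m] (A\<^sup>m - B\<^sup>m) = m ([x\<^sup>m] A - [x\<^sup>m] B)\<close>.\<close>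

lemma fps_eq_if_diagonal_power_nth_eq:
  fixes A B :: "'a::field_char_0 fps"
  assumes A0: "A $ 0 = 1" and B0: "B $ 0 = 1" and eq: "\<And>n. (A ^ n) $ n = (B ^ n) $ n"
  shows "A = B"
proof (rule ccontr)
  assume "A \<noteq> B"
  then have "\<exists>i. A $ i \<noteq> B $ i" by (simp add: fps_eq_iff)
  define m where "m = (LEAST i. A $ i \<noteq> B $ i)"
  have m: "A $ m \<noteq> B $ m" unfolding m_def by (rule LeastI_ex) fact
  have lt: "\<And>i. i < m \<Longrightarrow> A $ i = B $ i" unfolding m_def using not_less_Least by blast
  obtain k where k: "m = Suc k" using m A0 B0 by (cases m) auto
  define S where "S = (\<Sum>p<Suc k. A ^ p * B ^ (k - p))"
  have S0: "S $ 0 = of_nat m" unfolding S_def k by (simp add: fps_sum_nth fps_power_zeroth A0 B0)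
  have "A ^ m - B ^ m = (A - B) * S" unfolding k S_def by (rule diff_power_eq_sum)
  then have "(A ^ m) $ m - (B ^ m) $ m = ((A - B) * S) $ m" by (metis fps_sub_nth)
  also have "\<dots> = (\<Sum>i=0..m. (A - B) $ i * S $ (m - i))" by (rule fps_mult_nth)
  also have "\<dots> = (A - B) $ m * S $ 0"
    by (subst sum.remove[of _ m]) (auto simp: lt intro!: sum.neutral)
  finally have "(A $ m - B $ m) * of_nat m = 0" using S0 eq[of m] by simp
  then show False using m k by (simp del: of_nat_Suc)
qed

text \<open>The recurrence \<open>D\<^sub>n\<^sub>+\<^sub>1 = (2n + 1) D\<^sub>n\<close> is the differential equation
  \<open>D - 1 = x D + 2 x\<^sup>2 D'\<close>, which turns \<open>I = (D - 1) / D\<close> into \<open>x (x D\<^sup>2)' / D\<^sup>2\<close>.\<close>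

lemma odd_factor_recurrence_fps_eq:
  fixes D :: "'a::field_char_0 fps"
  assumes D0: "D $ 0 = 1" and D_Suc: "\<And>n. D $ Suc n = of_nat (2 * n + 1) * D $ n"
  shows "D - 1 = fps_X * D + fps_const 2 * fps_X ^ 2 * fps_deriv D"
proof (rule fps_ext)
  fix n show "(D - 1) $ n = (fps_X * D + fps_const 2 * fps_X ^ 2 * fps_deriv D) $ n"
  proof (cases n)
    case 0 then show ?thesis using D0 by (simp add: mult.assoc fps_X_power_mult_nth)
  next
    case (Suc m)
    have "(fps_const 2 * fps_X ^ 2 * fps_deriv D) $ Suc m = 2 * of_nat m * D $ m"
      by (cases m) (simp_all add: mult.assoc fps_X_power_mult_nth)
    moreover have "(D - 1) $ n = D $ m + 2 * of_nat m * D $ m"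
      using Suc D_Suc by (simp add: algebra_simps)
    ultimately show ?thesis using Suc by simp
  qed
qed

lemma eq_X_mult_deriv_div_square:
  fixes D I :: "'a::field_char_0 fps"
  assumes D0: "D $ 0 = 1" and D_Suc: "\<And>n. D $ Suc n = of_nat (2 * n + 1) * D $ n"
    and DI: "D = 1 + I * D"
  shows "I = fps_X * (fps_deriv (fps_X * D ^ 2) * inverse (D ^ 2))"
proof -
  define iD where "iD = inverse D"
  have DiD: "D * iD = 1" unfolding iD_def by (rule inverse_mult_eq_1') (simp add: D0)
  have "I = (D - 1) * iD"
    using DI DiD by (metis add_diff_cancel_left' mult.assoc mult.right_neutral)
  also have "\<dots> = fps_X + 2 * fps_X ^ 2 * fps_deriv D * iD"
    unfolding odd_factor_recurrence_fps_eq[OF D0 D_Suc] using DiD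
    by (simp add: algebra_simps fps_numeral_fps_const)
  also have "\<dots> = fps_X * ((D * iD) ^ 2 + 2 * fps_X * fps_deriv D * iD * (D * iD))"
    using DiD by (simp add: algebra_simps power2_eq_square)
  also have "\<dots> = fps_X * (fps_deriv (fps_X * D ^ 2) * inverse (D ^ 2))"
    unfolding iD_def fps_inverse_power by (simp add: fps_deriv_power algebra_simps power2_eq_square)
  finally show ?thesis .
qed

lemma chord_diagram_size_unique: "chord_diagram k M \<Longrightarrow> chord_diagram k' M \<Longrightarrow> k = k'"
proof (induction k k' rule: linorder_wlog)
  case (le a b)
  show ?case
  proof (rule ccontr)
    assume "a \<noteq> b"
    then have "2*b \<in> {1..2*b}" "2*b \<notin> {1..2*a}" using le by auto
    moreover obtain p where "p \<in> M" "2*b \<in> chord_set p"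
      using perfect_matching_covers[of "{1..2*b}" M "2*b"] le calculation(1)
      by (auto simp: chord_diagram_iff_perfect_matching)
    ultimately show False
      using perfect_matching_chordD[of "{1..2*a}" M p] le by (auto simp: chord_diagram_iff_perfect_matching chord_set_def)
  qed
qed (simp add: eq_commute)

lemma chord_diagram_0_iff: "chord_diagram 0 M \<longleftrightarrow> M = {}"
  unfolding chord_diagram_iff_perfect_matching by (simp add: perfect_matching_empty_iff)

lemma C_gf_nth_0: "C_gf $ 0 = 0"
  unfolding C_gf_def by (simp add: chord_diagram_0_iff connected_cd_def)

definition empty_or_connected :: "nat \<Rightarrow> (nat \<times> nat) set set" where
  "empty_or_connected k = {D. chord_diagram k D \<and> (D = {} \<or> connected_cd D)}"

lemma finite_empty_or_connected: "finite (empty_or_connected k)"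
  unfolding empty_or_connected_def chord_diagram_iff_perfect_matching
  by (rule finite_subset[OF _ finite_perfect_matchings[of "{1..2*k}"]]) auto

lemma one_plus_C_gf_nth: "(1 + C_gf) $ k = of_nat (card (empty_or_connected k))"
proof (cases "k = 0")
  case True
  then have "empty_or_connected k = {{}}" unfolding empty_or_connected_def by (auto simp: chord_diagram_0_iff)
  then show ?thesis using True C_gf_nth_0 by simp
next
  case False
  then have "{} \<notin> empty_or_connected k"
    using perfect_matching_covers[of "{1..2*k}" "{}" 1]
    by (auto simp: empty_or_connected_def chord_diagram_iff_perfect_matching)
  then have "empty_or_connected k = {M. chord_diagram k M \<and> connected_cd M}"
    unfolding empty_or_connected_def by auto
  then show ?thesis using False by (simp add: C_gf_def)
qed

lemma square_one_plus_C_gf_nth: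
  "(1 + C_gf) ^ 2 $ n =
     of_nat (card {(D1, D2). \<exists>n1 n2. n1 + n2 = n \<and>
                 chord_diagram n1 D1 \<and> chord_diagram n2 D2 \<and>
                 (D1 = {} \<or> connected_cd D1) \<and> (D2 = {} \<or> connected_cd D2)})"
proof -
  have pairs: "{(D1, D2). \<exists>n1 n2. n1 + n2 = n \<and>
                 chord_diagram n1 D1 \<and> chord_diagram n2 D2 \<and>
                 (D1 = {} \<or> connected_cd D1) \<and> (D2 = {} \<or> connected_cd D2)} =
        (\<Union>i\<in>{0..n}. empty_or_connected i \<times> empty_or_connected (n - i))"
    unfolding empty_or_connected_def by force
  have "card (\<Union>i\<in>{0..n}. empty_or_connected i \<times> empty_or_connected (n - i)) =
      (\<Sum>i=0..n. card (empty_or_connected i) * card (empty_or_connected (n - i)))"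
  proof (subst card_UN_disjoint)
    show "\<forall>i\<in>{0..n}. \<forall>j\<in>{0..n}. i \<noteq> j \<longrightarrow>
        empty_or_connected i \<times> empty_or_connected (n - i) \<inter> empty_or_connected j \<times> empty_or_connected (n - j) = {}"
      unfolding empty_or_connected_def using chord_diagram_size_unique by blast
  qed (simp_all add: finite_empty_or_connected card_cartesian_product)
  then show ?thesis
    unfolding pairs power2_eq_square fps_mult_nth one_plus_C_gf_nth by simp
qed

theorem proposition3p6p6:
  shows "(\<forall>A :: rat fps. (fps_nth A 0 = 1 \<and> (\<forall>n. fps_nth (A ^ n) n = fps_nth I0_gf (Suc n)))
            \<longleftrightarrow> A = (1 + C_gf) ^ 2)
         \<and> (\<forall>n. fps_nth ((1 + C_gf) ^ 2) n =
              of_nat (card {(D1, D2). \<exists>n1 n2. n1 + n2 = n \<and>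
                 chord_diagram n1 D1 \<and> chord_diagram n2 D2 \<and>
                 (D1 = {} \<or> connected_cd D1) \<and> (D2 = {} \<or> connected_cd D2)}))"
proof (intro conjI allI)
  let ?phi = "(1 + C_gf) ^ 2" and ?u = "diagram_fps ^ 2"
  have u0: "?u $ 0 = 1" by (simp add: fps_power_zeroth diagram_fps_nth_0)
  have comp: "?phi oo (fps_X * ?u) = ?u"
    using diagram_fps_connected_eq fps_compose_power[of "fps_X * ?u" "1 + C_gf" 2] by simp
  have diagonal: "(?phi ^ n) $ n = I0_gf $ Suc n" for n
  proof -
    have "(?phi ^ n) $ n = (fps_deriv (fps_X * ?u) * inverse ?u) $ n"
      by (rule lagrange_inversion_diagonal[OF u0 comp])
    also have "\<dots> = I0_gf $ Suc n"
      by (subst eq_X_mult_deriv_div_square[OF diagram_fps_nth_0 diagram_fps_nth_Suc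
            diagram_fps_indecomposable_eq]) simp
    finally show ?thesis .
  qed
  have phi0: "?phi $ 0 = 1" by (simp add: fps_power_zeroth C_gf_nth_0)
  fix A :: "rat fps"
  show "(A $ 0 = 1 \<and> (\<forall>n. (A ^ n) $ n = I0_gf $ Suc n)) \<longleftrightarrow> A = ?phi"
    using fps_eq_if_diagonal_power_nth_eq[of A ?phi] phi0 diagonal by auto
qed (rule square_one_plus_C_gf_nth)

end
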